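(* Let $\mu$ be a PU-monotone. If $A\in H_n$ and $B\in H_k$ are both neither positive semidefinite nor negative semidefinite and satisfy $\|A_+\|_\infty=\|B_+\|_\infty$ and $\|A_-\|_\infty=\|B_-\|_\infty$, then $\mu(A)=\mu(B)$. That is, restricted to such non-definite matrices, $\mu(A)$ is a function of $(\|A_+\|_\infty,\|A_-\|_\infty)$.
   Context: $H_n$ denotes the $n\times n$ complex Hermitian matrices. A linear map $\Phi:H_n\to H_k$ is PU if it maps positive semidefinite matrices to positive semidefinite matrices and $\Phi(\mathbb{1})=\mathbb{1}$. A function $\mu:\bigcup_{n\in\mathbb N}H_n\to\mathbb R$ is a PU-monotone if $\mu(\Phi(A))\leq\mu(A)$ for all $n,k$, all PU maps $\Phi:H_n\to H_k$ and all $A\in H_n$. Every $A$ decomposes uniquely as $A=A_+-A_-$ with $A_\pm$ positive semidefinite and $A_+A_-=0$. $\|\cdot\|_\infty$ is the operator norm. *)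

theory Defs
  imports "Jordan_Normal_Form.Matrix"
begin

definition herm_mat :: "nat \<Rightarrow> complex mat \<Rightarrow> bool" where
  "herm_mat n A \<longleftrightarrow> A \<in> carrier_mat n n \<and>
     (\<forall>i<n. \<forall>j<n. A $$ (i,j) = cnj (A $$ (j,i)))"

definition quad_form :: "complex mat \<Rightarrow> complex vec \<Rightarrow> complex" where
  "quad_form A v = (\<Sum>i<dim_vec v. \<Sum>j<dim_vec v. cnj (v $ i) * A $$ (i,j) * v $ j)"

definition psd_mat :: "nat \<Rightarrow> complex mat \<Rightarrow> bool" where
  "psd_mat n A \<longleftrightarrow> herm_mat n A \<and>
     (\<forall>v \<in> carrier_vec n. 0 \<le> Re (quad_form A v))"

definition vnorm :: "complex vec \<Rightarrow> real" where
  "vnorm v = sqrt (\<Sum>i<dim_vec v. (cmod (v $ i))\<^sup>2)"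

definition op_norm :: "complex mat \<Rightarrow> real" where
  "op_norm A = Sup {vnorm (A *\<^sub>v v) | v. v \<in> carrier_vec (dim_col A) \<and> vnorm v \<le> 1}"

text \<open>The unique decomposition A = A_+ - A_- with A_+, A_- psd and A_+ A_- = 0.\<close>
definition jordan_parts :: "complex mat \<Rightarrow> complex mat \<times> complex mat" where
  "jordan_parts A = (THE (P, N). psd_mat (dim_row A) P \<and> psd_mat (dim_row A) N \<and>
       A = P - N \<and> P * N = 0\<^sub>m (dim_row A) (dim_row A))"

definition pos_part :: "complex mat \<Rightarrow> complex mat" where
  "pos_part A = fst (jordan_parts A)"

definition neg_part :: "complex mat \<Rightarrow> complex mat" where
  "neg_part A = snd (jordan_parts A)"

text \<open>PU map H_n -> H_k: real-linear on H_n, maps H_n into H_k, positive, unital.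
  Values on non-Hermitian arguments are irrelevant.\<close>
definition pu_map :: "nat \<Rightarrow> nat \<Rightarrow> (complex mat \<Rightarrow> complex mat) \<Rightarrow> bool" where
  "pu_map n k \<Phi> \<longleftrightarrow>
     (\<forall>A. herm_mat n A \<longrightarrow> herm_mat k (\<Phi> A)) \<and>
     (\<forall>A B (a::real) (b::real). herm_mat n A \<and> herm_mat n B \<longrightarrow>
        \<Phi> (complex_of_real a \<cdot>\<^sub>m A + complex_of_real b \<cdot>\<^sub>m B) =
          complex_of_real a \<cdot>\<^sub>m \<Phi> A + complex_of_real b \<cdot>\<^sub>m \<Phi> B) \<and>
     (\<forall>A. psd_mat n A \<longrightarrow> psd_mat k (\<Phi> A)) \<and>
     \<Phi> (1\<^sub>m n) = 1\<^sub>m k"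

definition pu_monotone :: "(complex mat \<Rightarrow> real) \<Rightarrow> bool" where
  "pu_monotone \<mu> \<longleftrightarrow>
     (\<forall>n k \<Phi> A. 1 \<le> n \<and> 1 \<le> k \<and> pu_map n k \<Phi> \<and> herm_mat n A \<longrightarrow> \<mu> (\<Phi> A) \<le> \<mu> A)"

end

theory Submission
  imports Defs "Jordan_Normal_Form.Schur_Decomposition"
begin

text \<open>The spectrum of a Hermitian matrix \<open>A\<close> that is neither positive nor negative semidefinite
  lies in \<open>[-b, a]\<close>, where \<open>a = \<parallel>A\<^sub>+\<parallel> > 0\<close> and \<open>-b = -\<parallel>A\<^sub>-\<parallel> < 0\<close> are themselves
  eigenvalues, with unit eigenvectors \<open>u\<close> and \<open>w\<close>. If the spectrum of \<open>B\<close> also lies in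
  \<open>[-b, a]\<close>, let \<open>f\<close> be the affine function with \<open>f(-b) = 0\<close> and \<open>f(a) = 1\<close>; then
  \<open>0 \<le> f(B) \<le> 1\<close> and \<open>X \<mapsto> \<langle>u, X u\<rangle> f(B) + \<langle>w, X w\<rangle> (1 - f(B))\<close> is a PU map sending \<open>A\<close>
  to \<open>a f(B) - b (1 - f(B)) = B\<close>. When \<open>A\<close> and \<open>B\<close> have the same \<open>a\<close> and \<open>b\<close> this works in
  both directions, so monotonicity forces \<open>\<mu>(A) = \<mu>(B)\<close>.

  The functional calculus needed for \<open>f(B)\<close>, for \<open>A\<^sub>\<pm>\<close> and for their norms is realised by
  evaluating polynomials at Hermitian matrices: \<open>p(M)\<close> depends only on the values of \<open>p\<close> on the
  spectrum of \<open>M\<close>, by Cayley-Hamilton and because a nilpotent Hermitian matrix is zero.\<close>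

definition cinner :: "complex vec \<Rightarrow> complex vec \<Rightarrow> complex" where
  "cinner v w = (\<Sum>i<dim_vec v. cnj (v $ i) * w $ i)"

lemma quad_form_eq_cinner:
  assumes "A \<in> carrier_mat n n" "v \<in> carrier_vec n"
  shows "quad_form A v = cinner v (A *\<^sub>v v)"
proof -
  have "quad_form A v = (\<Sum>i<n. cnj (v $ i) * (\<Sum>j<n. A $$ (i,j) * v $ j))"
    using assms unfolding quad_form_def by (simp add: sum_distrib_left mult.assoc)
  also have "\<dots> = cinner v (A *\<^sub>v v)"
    using assms unfolding cinner_def by (simp add: row_def scalar_prod_def lessThan_atLeast0)
  finally show ?thesis .
qed

lemma cinner_diff_right:
  "dim_vec x = dim_vec v \<Longrightarrow> dim_vec y = dim_vec v \<Longrightarrow> cinner v (x - y) = cinner v x - cinner v y"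
  unfolding cinner_def by (simp add: right_diff_distrib sum_subtractf)

lemma cinner_smult_right: "dim_vec x = dim_vec v \<Longrightarrow> cinner v (c \<cdot>\<^sub>v x) = c * cinner v x"
  unfolding cinner_def by (simp add: sum_distrib_left algebra_simps)

lemma cinner_smult_left: "cinner (c \<cdot>\<^sub>v x) w = cnj c * cinner x w"
  unfolding cinner_def by (simp add: sum_distrib_left algebra_simps)

lemma cinner_zero_left: "cinner (0\<^sub>v n) w = 0"
  unfolding cinner_def by simp

lemma cinner_self: "cinner v v = complex_of_real (\<Sum>i<dim_vec v. (cmod (v $ i))\<^sup>2)"
  unfolding cinner_def of_real_sum by (intro sum.cong refl) (metis complex_norm_square mult.commute)

lemma cinner_self_vnorm: "cinner v v = complex_of_real ((vnorm v)\<^sup>2)"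
  unfolding cinner_self vnorm_def by (simp add: sum_nonneg)

lemma vnorm_eq_sqrt_cinner: "vnorm v = sqrt (Re (cinner v v))"
  unfolding vnorm_def cinner_self by simp

lemma Re_cinner_self_ge_0: "0 \<le> Re (cinner v v)"
  unfolding cinner_self by (simp add: sum_nonneg)

lemma Re_cinner_self_le_0D:
  assumes "Re (cinner v v) \<le> 0"
  shows "v = 0\<^sub>v (dim_vec v)"
proof -
  have "(\<Sum>i<dim_vec v. (cmod (v $ i))\<^sup>2) = 0"
    using assms Re_cinner_self_ge_0[of v] unfolding cinner_self by simp
  then have "\<forall>i\<in>{..<dim_vec v}. (cmod (v $ i))\<^sup>2 = 0"
    by (subst sum_nonneg_eq_0_iff[symmetric]) auto
  then show ?thesis by (intro eq_vecI) auto
qed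

lemma cinner_self_eq_0D: "cinner v v = 0 \<Longrightarrow> v = 0\<^sub>v (dim_vec v)"
  by (rule Re_cinner_self_le_0D) simp

lemma vnorm_nonneg: "0 \<le> vnorm v"
  unfolding vnorm_def by (simp add: sum_nonneg)

lemma vnorm_pos: "v \<noteq> 0\<^sub>v (dim_vec v) \<Longrightarrow> 0 < vnorm v"
  using Re_cinner_self_le_0D[of v] unfolding vnorm_eq_sqrt_cinner by (auto simp: not_le)

lemma vnorm_smult: "vnorm (c \<cdot>\<^sub>v v) = cmod c * vnorm v"
proof -
  have "cnj c * c = complex_of_real ((cmod c)\<^sup>2)"
    by (metis complex_norm_square mult.commute)
  then have "cinner (c \<cdot>\<^sub>v v) (c \<cdot>\<^sub>v v) = complex_of_real ((cmod c)\<^sup>2) * cinner v v"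
    by (simp add: cinner_smult_left cinner_smult_right mult.assoc[symmetric])
  then have "Re (cinner (c \<cdot>\<^sub>v v) (c \<cdot>\<^sub>v v)) = (cmod c)\<^sup>2 * Re (cinner v v)"
    by simp
  then show ?thesis unfolding vnorm_eq_sqrt_cinner by (simp add: real_sqrt_mult)
qed

lemma zero_mat_mult_vec: "v \<in> carrier_vec m \<Longrightarrow> 0\<^sub>m n m *\<^sub>v v = 0\<^sub>v n"
  by (intro eq_vecI) (auto simp: scalar_prod_def)

lemma smult_mat_mult_vec:
  assumes "A \<in> carrier_mat n m" "u \<in> carrier_vec m"
  shows "(k \<cdot>\<^sub>m A) *\<^sub>v u = k \<cdot>\<^sub>v (A *\<^sub>v u)"
  using assms by (intro eq_vecI) (auto simp: scalar_prod_def sum_distrib_left mult.assoc)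

lemma one_smult_mat: "(X :: 'a :: semiring_1 mat) \<in> carrier_mat n m \<Longrightarrow> 1 \<cdot>\<^sub>m X = X"
  by (intro eq_matI) auto

lemma mat_eq_by_mult_vec:
  fixes X Y :: "complex mat"
  assumes X: "X \<in> carrier_mat n m" and Y: "Y \<in> carrier_mat n m"
    and eq: "\<And>v. v \<in> carrier_vec m \<Longrightarrow> X *\<^sub>v v = Y *\<^sub>v v"
  shows "X = Y"
proof (rule eq_matI)
  fix i j assume i: "i < dim_row Y" and j: "j < dim_col Y"
  have "(X *\<^sub>v unit_vec m j) $ i = (Y *\<^sub>v unit_vec m j) $ i" using eq[of "unit_vec m j"] by simp
  then show "X $$ (i,j) = Y $$ (i,j)" using X Y i j by simp
qed (use X Y in auto)

lemma herm_mat_carrier: "herm_mat n H \<Longrightarrow> H \<in> carrier_mat n n"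
  unfolding herm_mat_def by blast

lemma herm_mat_entry: "herm_mat n H \<Longrightarrow> i < n \<Longrightarrow> j < n \<Longrightarrow> H $$ (i,j) = cnj (H $$ (j,i))"
  unfolding herm_mat_def by blast

lemma herm_matI:
  "H \<in> carrier_mat n n \<Longrightarrow> (\<And>i j. i < n \<Longrightarrow> j < n \<Longrightarrow> H $$ (i,j) = cnj (H $$ (j,i))) \<Longrightarrow>
    herm_mat n H"
  unfolding herm_mat_def by blast

lemma herm_mat_one: "herm_mat n (1\<^sub>m n)"
  by (rule herm_matI) auto

lemma herm_mat_zero: "herm_mat n (0\<^sub>m n n)"
  by (rule herm_matI) auto

lemma herm_mat_lincomb:
  assumes X: "herm_mat n X" and Y: "herm_mat n Y" and "a \<in> \<real>" "b \<in> \<real>"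
  shows "herm_mat n (a \<cdot>\<^sub>m X + b \<cdot>\<^sub>m Y)"
proof (rule herm_matI)
  have Xc: "X \<in> carrier_mat n n" and Yc: "Y \<in> carrier_mat n n" using X Y herm_mat_carrier by auto
  then show "a \<cdot>\<^sub>m X + b \<cdot>\<^sub>m Y \<in> carrier_mat n n" by simp
  fix i j assume i: "i < n" and j: "j < n"
  have "cnj a = a" "cnj b = b" using \<open>a \<in> \<real>\<close> \<open>b \<in> \<real>\<close> Reals_cnj_iff by auto
  then show "(a \<cdot>\<^sub>m X + b \<cdot>\<^sub>m Y) $$ (i,j) = cnj ((a \<cdot>\<^sub>m X + b \<cdot>\<^sub>m Y) $$ (j,i))"
    using Xc Yc i j herm_mat_entry[OF X i j] herm_mat_entry[OF Y i j] by simp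
qed

lemma mult_mat_entry:
  assumes "X \<in> carrier_mat n n" "Y \<in> carrier_mat n n" "i < n" "j < n"
  shows "(X * Y) $$ (i,j) = (\<Sum>l<n. X $$ (i,l) * Y $$ (l,j))"
  using assms by (simp add: scalar_prod_def lessThan_atLeast0)

lemma mult_mat_vec_entry:
  assumes "H \<in> carrier_mat n n" "v \<in> carrier_vec n" "i < n"
  shows "(H *\<^sub>v v) $ i = (\<Sum>j<n. H $$ (i,j) * v $ j)"
  using assms by (simp add: scalar_prod_def lessThan_atLeast0)

lemma herm_mat_mult_commute:
  assumes X: "herm_mat n X" and Y: "herm_mat n Y" and XY: "X * Y = Y * X"
  shows "herm_mat n (X * Y)"
proof (rule herm_matI)
  have Xc: "X \<in> carrier_mat n n" and Yc: "Y \<in> carrier_mat n n" using X Y herm_mat_carrier by auto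
  then show "X * Y \<in> carrier_mat n n" by simp
  fix i j assume i: "i < n" and j: "j < n"
  have "(X * Y) $$ (i,j) = (Y * X) $$ (i,j)" using XY by simp
  also have "\<dots> = (\<Sum>l<n. Y $$ (i,l) * X $$ (l,j))" by (rule mult_mat_entry[OF Yc Xc i j])
  also have "\<dots> = (\<Sum>l<n. cnj (X $$ (j,l) * Y $$ (l,i)))"
    using herm_mat_entry[OF X, of _ j] herm_mat_entry[OF Y, of i] i j by (intro sum.cong) auto
  also have "\<dots> = cnj ((X * Y) $$ (j,i))" by (simp add: mult_mat_entry[OF Xc Yc j i] cnj_sum)
  finally show "(X * Y) $$ (i,j) = cnj ((X * Y) $$ (j,i))" .
qed

lemma herm_mat_cinner:
  assumes H: "herm_mat n H" and v: "v \<in> carrier_vec n" and w: "w \<in> carrier_vec n"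
  shows "cinner (H *\<^sub>v v) w = cinner v (H *\<^sub>v w)"
proof -
  have Hc: "H \<in> carrier_mat n n" using herm_mat_carrier[OF H] .
  have "cinner (H *\<^sub>v v) w = (\<Sum>i<n. cnj (\<Sum>j<n. H $$ (i,j) * v $ j) * w $ i)"
    unfolding cinner_def using Hc
    by (intro sum.cong) (auto simp del: index_mult_mat_vec simp: mult_mat_vec_entry[OF Hc v])
  also have "\<dots> = (\<Sum>i<n. \<Sum>j<n. cnj (v $ j) * (H $$ (j,i) * w $ i))"
  proof (rule sum.cong[OF refl])
    fix i assume i: "i \<in> {..<n}"
    have "cnj (\<Sum>j<n. H $$ (i,j) * v $ j) * w $ i = (\<Sum>j<n. cnj (H $$ (i,j)) * cnj (v $ j) * w $ i)"
      by (simp add: cnj_sum sum_distrib_right)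
    also have "\<dots> = (\<Sum>j<n. cnj (v $ j) * (H $$ (j,i) * w $ i))"
      using herm_mat_entry[OF H, of _ i] i by (intro sum.cong) auto
    finally show "cnj (\<Sum>j<n. H $$ (i,j) * v $ j) * w $ i = (\<Sum>j<n. cnj (v $ j) * (H $$ (j,i) * w $ i))" .
  qed
  also have "\<dots> = (\<Sum>j<n. \<Sum>i<n. cnj (v $ j) * (H $$ (j,i) * w $ i))" by (rule sum.swap)
  also have "\<dots> = cinner v (H *\<^sub>v w)"
    unfolding cinner_def using v
    by (intro sum.cong) (auto simp del: index_mult_mat_vec simp: mult_mat_vec_entry[OF Hc w] sum_distrib_left)
  finally show ?thesis .
qed

lemma herm_mat_mult_vec_square_eq_0D:
  assumes H: "herm_mat n H" and w: "w \<in> carrier_vec n" and "H *\<^sub>v (H *\<^sub>v w) = 0\<^sub>v n"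
  shows "H *\<^sub>v w = 0\<^sub>v n"
proof -
  have "cinner (H *\<^sub>v w) (H *\<^sub>v w) = cinner w (H *\<^sub>v (H *\<^sub>v w))"
    using herm_mat_cinner[OF H w] herm_mat_carrier[OF H] w by simp
  also have "\<dots> = 0" unfolding \<open>H *\<^sub>v (H *\<^sub>v w) = 0\<^sub>v n\<close> cinner_def using w by simp
  finally show ?thesis using cinner_self_eq_0D[of "H *\<^sub>v w"] herm_mat_carrier[OF H] by simp
qed

lemma psd_mat_herm: "psd_mat n P \<Longrightarrow> herm_mat n P"
  unfolding psd_mat_def by blast

lemma psd_mat_carrier: "psd_mat n P \<Longrightarrow> P \<in> carrier_mat n n"
  using herm_mat_carrier psd_mat_herm by blast

lemma psd_mat_cinner:
  assumes "psd_mat n P" "u \<in> carrier_vec n"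
  shows "0 \<le> Re (cinner u (P *\<^sub>v u))"
  using assms quad_form_eq_cinner[OF psd_mat_carrier[OF assms(1)] assms(2)]
  unfolding psd_mat_def by metis

lemma psd_mat_dim_0: "herm_mat 0 M \<Longrightarrow> psd_mat 0 M"
  unfolding psd_mat_def quad_form_def by simp

lemma psd_mat_square:
  assumes G: "herm_mat n G"
  shows "psd_mat n (G * G)"
  unfolding psd_mat_def
proof (intro conjI ballI)
  have Gc: "G \<in> carrier_mat n n" using herm_mat_carrier[OF G] .
  show "herm_mat n (G * G)" by (rule herm_mat_mult_commute[OF G G refl])
  fix v :: "complex vec" assume v: "v \<in> carrier_vec n"
  have "quad_form (G * G) v = cinner (G *\<^sub>v v) (G *\<^sub>v v)"
    using quad_form_eq_cinner[OF mult_carrier_mat[OF Gc Gc] v] assoc_mult_mat_vec[OF Gc Gc v]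
      herm_mat_cinner[OF G v] Gc v by simp
  then show "0 \<le> Re (quad_form (G * G) v)" using Re_cinner_self_ge_0 by simp
qed

lemma quad_form_lincomb:
  assumes "X \<in> carrier_mat n n" "Y \<in> carrier_mat n n" "u \<in> carrier_vec n"
  shows "quad_form (c \<cdot>\<^sub>m X + d \<cdot>\<^sub>m Y) u = c * quad_form X u + d * quad_form Y u"
proof -
  have "quad_form (c \<cdot>\<^sub>m X + d \<cdot>\<^sub>m Y) u =
    (\<Sum>i<n. \<Sum>j<n. c * (cnj (u $ i) * X $$ (i,j) * u $ j) + d * (cnj (u $ i) * Y $$ (i,j) * u $ j))"
    unfolding quad_form_def using assms by (intro sum.cong) (auto simp: algebra_simps)
  also have "\<dots> = c * quad_form X u + d * quad_form Y u"
    unfolding quad_form_def using assms by (simp add: sum.distrib sum_distrib_left)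
  finally show ?thesis .
qed

lemma psd_mat_nonneg_lincomb:
  assumes C: "psd_mat n C" and D: "psd_mat n D" and "0 \<le> \<alpha>" "0 \<le> \<beta>"
  shows "psd_mat n (complex_of_real \<alpha> \<cdot>\<^sub>m C + complex_of_real \<beta> \<cdot>\<^sub>m D)"
  unfolding psd_mat_def
proof (intro conjI ballI)
  show "herm_mat n (complex_of_real \<alpha> \<cdot>\<^sub>m C + complex_of_real \<beta> \<cdot>\<^sub>m D)"
    by (rule herm_mat_lincomb[OF psd_mat_herm[OF C] psd_mat_herm[OF D]]) auto
  fix v :: "complex vec" assume v: "v \<in> carrier_vec n"
  have "0 \<le> Re (quad_form C v)" "0 \<le> Re (quad_form D v)"
    using C D v unfolding psd_mat_def by blast+
  then show "0 \<le> Re (quad_form (complex_of_real \<alpha> \<cdot>\<^sub>m C + complex_of_real \<beta> \<cdot>\<^sub>m D) v)"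
    using quad_form_lincomb[OF psd_mat_carrier[OF C] psd_mat_carrier[OF D] v] \<open>0 \<le> \<alpha>\<close> \<open>0 \<le> \<beta>\<close>
    by simp
qed

section \<open>Evaluating polynomials at matrices\<close>

definition mat_poly :: "complex mat \<Rightarrow> complex poly \<Rightarrow> complex mat" where
  "mat_poly M p = fold_coeffs (\<lambda>a B. a \<cdot>\<^sub>m 1\<^sub>m (dim_row M) + M * B) p (0\<^sub>m (dim_row M) (dim_row M))"

lemma mat_poly_0[simp]: "mat_poly M 0 = 0\<^sub>m (dim_row M) (dim_row M)"
  unfolding mat_poly_def by simp

lemma mat_poly_pCons:
  assumes M: "M \<in> carrier_mat n n"
  shows "mat_poly M (pCons a p) = a \<cdot>\<^sub>m 1\<^sub>m n + M * mat_poly M p"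
proof (cases "a = 0 \<and> p = 0")
  case True
  have "a \<cdot>\<^sub>m 1\<^sub>m n + M * 0\<^sub>m n n = 0\<^sub>m n n"
    using M True by (intro eq_matI) auto
  then show ?thesis using True M by simp
next
  case False
  then show ?thesis using M unfolding mat_poly_def by (cases "a = 0") auto
qed

lemma mat_poly_carrier[simp]:
  assumes M: "M \<in> carrier_mat n n"
  shows "mat_poly M p \<in> carrier_mat n n"
proof (induction p)
  case (pCons a p)
  then show ?case using M by (simp add: mat_poly_pCons[OF M])
qed (use M in simp)

lemma mat_poly_dims[simp]:
  assumes "M \<in> carrier_mat n n"
  shows "dim_row (mat_poly M p) = n" "dim_col (mat_poly M p) = n"
  using mat_poly_carrier[OF assms] by auto

lemma mat_poly_pCons_0:
  assumes M: "M \<in> carrier_mat n n"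
  shows "mat_poly M (pCons 0 p) = M * mat_poly M p"
proof -
  have c: "mat_poly M p \<in> carrier_mat n n" using M by simp
  have "0 \<cdot>\<^sub>m 1\<^sub>m n + M * mat_poly M p = M * mat_poly M p"
    using M c by (intro eq_matI) auto
  then show ?thesis by (simp add: mat_poly_pCons[OF M])
qed

lemma mat_poly_add:
  assumes M: "M \<in> carrier_mat n n"
  shows "mat_poly M (p + q) = mat_poly M p + mat_poly M q"
proof (induction p q rule: poly_induct2)
  case 0
  then show ?case using M by simp
next
  case (pCons a p b q)
  have c: "mat_poly M p \<in> carrier_mat n n" "mat_poly M q \<in> carrier_mat n n" using M by auto
  have "mat_poly M (pCons a p + pCons b q) = (a+b) \<cdot>\<^sub>m 1\<^sub>m n + M * (mat_poly M p + mat_poly M q)"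
    using pCons by (simp add: mat_poly_pCons[OF M])
  also have "\<dots> = (a \<cdot>\<^sub>m 1\<^sub>m n + M * mat_poly M p) + (b \<cdot>\<^sub>m 1\<^sub>m n + M * mat_poly M q)"
    using M c by (simp add: mult_add_distrib_mat[OF M c] ) (intro eq_matI, auto simp: algebra_simps)
  finally show ?case by (simp add: mat_poly_pCons[OF M])
qed

lemma mat_poly_smult:
  assumes M: "M \<in> carrier_mat n n"
  shows "mat_poly M (smult c p) = c \<cdot>\<^sub>m mat_poly M p"
proof (induction p)
  case 0
  then show ?case using M by (intro eq_matI) auto
next
  case (pCons a p)
  have c: "mat_poly M p \<in> carrier_mat n n" using M by auto
  then have cc: "dim_row (mat_poly M p) = n" "dim_col (mat_poly M p) = n" by auto
  have "mat_poly M (smult c (pCons a p)) = (c*a) \<cdot>\<^sub>m 1\<^sub>m n + M * (c \<cdot>\<^sub>m mat_poly M p)"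
    using pCons by (simp add: mat_poly_pCons[OF M])
  also have "\<dots> = c \<cdot>\<^sub>m (a \<cdot>\<^sub>m 1\<^sub>m n + M * mat_poly M p)"
    using M c by (simp add: mult_smult_distrib[OF M c]) (intro eq_matI, auto simp: algebra_simps cc)
  finally show ?case by (simp add: mat_poly_pCons[OF M])
qed

lemma mat_poly_mult:
  assumes M: "M \<in> carrier_mat n n"
  shows "mat_poly M (p * q) = mat_poly M p * mat_poly M q"
proof (induction p)
  case 0
  have "mat_poly M q \<in> carrier_mat n n" using M by auto
  then show ?case using M left_mult_zero_mat[OF \<open>mat_poly M q \<in> carrier_mat n n\<close>, of n] by simp
next
  case (pCons a p)
  have c: "mat_poly M p \<in> carrier_mat n n" "mat_poly M q \<in> carrier_mat n n" using M by auto
  have "mat_poly M (pCons a p * q) = a \<cdot>\<^sub>m mat_poly M q + M * (mat_poly M p * mat_poly M q)"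
    using pCons by (simp add: mat_poly_add[OF M] mat_poly_smult[OF M] mat_poly_pCons_0[OF M])
  also have "\<dots> = (a \<cdot>\<^sub>m 1\<^sub>m n) * mat_poly M q + (M * mat_poly M p) * mat_poly M q"
  proof -
    have "(a \<cdot>\<^sub>m 1\<^sub>m n) * mat_poly M q = a \<cdot>\<^sub>m mat_poly M q"
      using mult_smult_assoc_mat[OF one_carrier_mat c(2)] left_mult_one_mat[OF c(2)] by simp
    moreover have "(M * mat_poly M p) * mat_poly M q = M * (mat_poly M p * mat_poly M q)" using assoc_mult_mat[OF M c(1) c(2)] .
    ultimately show ?thesis by simp
  qed
  also have "\<dots> = (a \<cdot>\<^sub>m 1\<^sub>m n + M * mat_poly M p) * mat_poly M q"
    using M c by (intro add_mult_distrib_mat[symmetric]) auto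
  finally show ?case by (simp add: mat_poly_pCons[OF M])
qed

lemma mat_poly_const:
  assumes M: "M \<in> carrier_mat n n"
  shows "mat_poly M [:a:] = a \<cdot>\<^sub>m 1\<^sub>m n"
  using M by (simp add: mat_poly_pCons[OF M])

lemma mat_poly_X:
  assumes M: "M \<in> carrier_mat n n"
  shows "mat_poly M [:0,1:] = M"
proof -
  have "M * (1 \<cdot>\<^sub>m 1\<^sub>m n) = M" using M by (intro eq_matI) auto
  then show ?thesis using M by (simp add: mat_poly_pCons_0[OF M] mat_poly_const[OF M])
qed

lemma mat_poly_diff:
  assumes M: "M \<in> carrier_mat n n"
  shows "mat_poly M (p - q) = mat_poly M p - mat_poly M q"
proof -
  have "p - q = p + smult (-1) q" by simp
  then have "mat_poly M (p - q) = mat_poly M (p + smult (-1) q)" by simp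
  also have "\<dots> = mat_poly M p + (-1) \<cdot>\<^sub>m mat_poly M q" by (simp only: mat_poly_add[OF M] mat_poly_smult[OF M])
  also have "\<dots> = mat_poly M p - mat_poly M q"
    using mat_poly_carrier[OF M, of p] mat_poly_carrier[OF M, of q] by (intro eq_matI) auto
  finally show ?thesis .
qed

lemma mat_poly_one:
  assumes M: "M \<in> carrier_mat n n"
  shows "mat_poly M 1 = 1\<^sub>m n"
proof -
  have "mat_poly M 1 = mat_poly M [:1:]" by (simp only: one_pCons)
  also have "\<dots> = 1 \<cdot>\<^sub>m 1\<^sub>m n" by (rule mat_poly_const[OF M])
  also have "\<dots> = 1\<^sub>m n" by (intro eq_matI) auto
  finally show ?thesis .
qed

lemma mat_poly_uminus_X:
  assumes M: "M \<in> carrier_mat n n"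
  shows "mat_poly M [:0, -1:] = - M"
proof -
  have "[:0, -1:] = smult (-1) [:0, 1::complex:]" by simp
  then have "mat_poly M [:0, -1:] = (-1) \<cdot>\<^sub>m M" by (simp only: mat_poly_smult[OF M] mat_poly_X[OF M])
  also have "\<dots> = - M" using M by (intro eq_matI) auto
  finally show ?thesis .
qed

lemma mat_poly_eigenvector:
  assumes M: "M \<in> carrier_mat n n" and u: "u \<in> carrier_vec n"
    and e: "M *\<^sub>v u = e \<cdot>\<^sub>v u"
  shows "mat_poly M p *\<^sub>v u = poly p e \<cdot>\<^sub>v u"
proof (induction p)
  case 0
  then show ?case using M u by (intro eq_vecI) auto
next
  case (pCons a p)
  have c: "mat_poly M p \<in> carrier_mat n n" using M by auto
  have "(a \<cdot>\<^sub>m 1\<^sub>m n + M * mat_poly M p) *\<^sub>v u = a \<cdot>\<^sub>v u + M *\<^sub>v (mat_poly M p *\<^sub>v u)"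
    using M c u by (simp add: add_mult_distrib_mat_vec[of _ n n] smult_mat_mult_vec[of _ n n] assoc_mult_mat_vec[OF M c u])
  also have "\<dots> = a \<cdot>\<^sub>v u + poly p e \<cdot>\<^sub>v (e \<cdot>\<^sub>v u)"
    using pCons.IH M u by (simp add: mult_mat_vec e)
  also have "\<dots> = poly (pCons a p) e \<cdot>\<^sub>v u"
    using u by (intro eq_vecI) (auto simp: algebra_simps)
  finally show ?case by (simp add: mat_poly_pCons[OF M])
qed

lemma mat_poly_linear:
  assumes M: "M \<in> carrier_mat n n"
  shows "mat_poly M [:c,1:] = c \<cdot>\<^sub>m 1\<^sub>m n + M"
proof -
  have "M * (1 \<cdot>\<^sub>m 1\<^sub>m n) = M" using M by (intro eq_matI) auto
  then show ?thesis using M by (simp add: mat_poly_pCons[OF M] mat_poly_const[OF M])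
qed

lemma mat_poly_linear_mult_vec:
  assumes M: "M \<in> carrier_mat n n" and v: "v \<in> carrier_vec n"
  shows "mat_poly M [:c,1:] *\<^sub>v v = c \<cdot>\<^sub>v v + M *\<^sub>v v"
  using M v by (simp add: mat_poly_linear[OF M] add_mult_distrib_mat_vec[of _ n n] smult_mat_mult_vec[of _ n n])

lemma upper_triangular_linear_factor_mult_vec:
  assumes B: "B \<in> carrier_mat n n" and ut: "upper_triangular B" and v: "v \<in> carrier_vec n"
    and vz: "\<And>i. k < i \<Longrightarrow> i < n \<Longrightarrow> v $ i = 0" and ki: "k \<le> i" and i: "i < n"
  shows "(mat_poly B [:- (B $$ (k,k)), 1:] *\<^sub>v v) $ i = 0"
proof -
  have "(\<Sum>j<n. B $$ (i,j) * v $ j) = (\<Sum>j<n. if j = i then B $$ (i,i) * v $ i else 0)"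
  proof (rule sum.cong[OF refl])
    fix j assume j: "j \<in> {..<n}"
    show "B $$ (i,j) * v $ j = (if j = i then B $$ (i,i) * v $ i else 0)"
    proof (cases "j < i")
      case True
      then show ?thesis using ut B i unfolding upper_triangular_def by auto
    next
      case False
      then show ?thesis using vz ki j by (cases "j = i") auto
    qed
  qed
  then have "(mat_poly B [:- (B $$ (k,k)), 1:] *\<^sub>v v) $ i = (B $$ (i,i) - B $$ (k,k)) * v $ i"
    using B v i
    by (simp add: mat_poly_linear_mult_vec[OF B v] mult_mat_vec_entry[OF B v i] algebra_simps
        del: index_mult_mat_vec)
  then show ?thesis using vz ki i by (cases "i = k") auto
qed

text \<open>For upper triangular \<open>B\<close>, the first \<open>k\<close> linear factors of the characteristic polynomial
  already annihilate the span of the first \<open>k\<close> unit vectors.\<close>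

lemma upper_triangular_cayley_hamilton_aux:
  assumes B: "B \<in> carrier_mat n n" and ut: "upper_triangular B"
  shows "k \<le> n \<Longrightarrow> v \<in> carrier_vec n \<Longrightarrow> (\<And>i. k \<le> i \<Longrightarrow> i < n \<Longrightarrow> v $ i = 0) \<Longrightarrow>
    mat_poly B (\<Prod>i<k. [:- (B $$ (i,i)), 1:]) *\<^sub>v v = 0\<^sub>v n"
proof (induction k arbitrary: v)
  case 0
  then have "v = 0\<^sub>v n" by (intro eq_vecI) auto
  then show ?case using B mat_poly_carrier[OF B, of 1] by (intro eq_vecI) (auto simp: scalar_prod_def)
next
  case (Suc k)
  let ?T = "mat_poly B (\<Prod>i<k. [:- (B $$ (i,i)), 1:])"
  let ?L = "mat_poly B [:- (B $$ (k,k)), 1:]"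
  have "mat_poly B (\<Prod>i<Suc k. [:- (B $$ (i,i)), 1:]) = ?T * ?L"
    by (simp only: prod.lessThan_Suc mat_poly_mult[OF B])
  then have "mat_poly B (\<Prod>i<Suc k. [:- (B $$ (i,i)), 1:]) *\<^sub>v v = ?T *\<^sub>v (?L *\<^sub>v v)"
    using B Suc.prems by (simp add: assoc_mult_mat_vec[of _ n n _ n])
  also have "\<dots> = 0\<^sub>v n"
    using Suc.prems upper_triangular_linear_factor_mult_vec[OF B ut \<open>v \<in> carrier_vec n\<close>]
    by (intro Suc.IH) (auto intro: mult_mat_vec_carrier[OF mat_poly_carrier[OF B]])
  finally show ?case .
qed

lemma upper_triangular_cayley_hamilton:
  assumes B: "B \<in> carrier_mat n n" and ut: "upper_triangular B"
  shows "mat_poly B (\<Prod>e\<leftarrow>diag_mat B. [:- e, 1:]) = 0\<^sub>m n n"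
proof -
  have "(\<Prod>e\<leftarrow>diag_mat B. [:- e, 1:]) = (\<Prod>i<n. [:- (B $$ (i,i)), 1:])"
    using B unfolding diag_mat_def by (simp add: prod.distinct_set_conv_list[symmetric] lessThan_atLeast0 comp_def)
  then show ?thesis
    using upper_triangular_cayley_hamilton_aux[OF B ut le_refl] B
    by (intro mat_eq_by_mult_vec[of _ n n]) auto
qed

lemma mat_poly_intertwine:
  assumes A: "A \<in> carrier_mat n n" and B: "B \<in> carrier_mat n n" and P: "P \<in> carrier_mat n n"
    and AP: "A * P = P * B"
  shows "mat_poly A p * P = P * mat_poly B p"
proof (induction p)
  case 0
  then show ?case using A B P by (simp add: left_mult_zero_mat[of _ n n] right_mult_zero_mat[of _ n n])
next
  case (pCons a p)
  have cA: "mat_poly A p \<in> carrier_mat n n" using A by simp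
  have cB: "mat_poly B p \<in> carrier_mat n n" using B by simp
  have "(a \<cdot>\<^sub>m 1\<^sub>m n + A * mat_poly A p) * P = (a \<cdot>\<^sub>m 1\<^sub>m n) * P + (A * mat_poly A p) * P"
    using A P cA by (intro add_mult_distrib_mat) auto
  also have "(a \<cdot>\<^sub>m 1\<^sub>m n) * P = P * (a \<cdot>\<^sub>m 1\<^sub>m n)"
    using mult_smult_distrib[OF P one_carrier_mat, of a] right_mult_one_mat[OF P]
      mult_smult_assoc_mat[OF one_carrier_mat P, of a] left_mult_one_mat[OF P] by simp
  also have "(A * mat_poly A p) * P = A * (mat_poly A p * P)" by (rule assoc_mult_mat[OF A cA P])
  also have "\<dots> = A * (P * mat_poly B p)" using pCons by simp
  also have "\<dots> = (A * P) * mat_poly B p" by (rule assoc_mult_mat[OF A P cB, symmetric])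
  also have "\<dots> = (P * B) * mat_poly B p" using AP by simp
  also have "\<dots> = P * (B * mat_poly B p)" by (rule assoc_mult_mat[OF P B cB])
  also have "P * (a \<cdot>\<^sub>m 1\<^sub>m n) + P * (B * mat_poly B p) = P * (a \<cdot>\<^sub>m 1\<^sub>m n + B * mat_poly B p)"
    using P B cB by (intro mult_add_distrib_mat[symmetric]) auto
  finally show ?case by (simp add: mat_poly_pCons[OF A] mat_poly_pCons[OF B])
qed

lemma mat_poly_similar:
  assumes A: "A \<in> carrier_mat n n" and B: "B \<in> carrier_mat n n" and P: "P \<in> carrier_mat n n"
    and Q: "Q \<in> carrier_mat n n" and PQ: "P * Q = 1\<^sub>m n" and QP: "Q * P = 1\<^sub>m n" and APBQ: "A = P * B * Q"
  shows "mat_poly A p = P * mat_poly B p * Q"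
proof -
  have "A * P = P * B * (Q * P)" unfolding APBQ
    by (rule assoc_mult_mat[OF mult_carrier_mat[OF P B] Q P])
  then have AP: "A * P = P * B" using QP P B by simp
  have cA: "mat_poly A p \<in> carrier_mat n n" using A by simp
  have "mat_poly A p = mat_poly A p * (P * Q)" using PQ cA by simp
  also have "\<dots> = (mat_poly A p * P) * Q" by (rule assoc_mult_mat[OF cA P Q, symmetric])
  also have "\<dots> = P * mat_poly B p * Q" using mat_poly_intertwine[OF A B P AP] by simp
  finally show ?thesis .
qed

theorem cayley_hamilton:
  assumes A: "(A :: complex mat) \<in> carrier_mat n n"
  shows "mat_poly A (char_poly A) = 0\<^sub>m n n"
proof -
  obtain es where es: "char_poly A = (\<Prod>a\<leftarrow>es. [:- a, 1:])" using char_poly_factorized[OF A] by blast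
  obtain B P Q where sd: "schur_decomposition A es = (B,P,Q)" by (cases "schur_decomposition A es") auto
  from schur_decomposition[OF A es sd]
  have sim: "similar_mat_wit A B P Q" and ut: "upper_triangular B" and d: "diag_mat B = es" by auto
  from similar_mat_witD2[OF A sim] have B: "B \<in> carrier_mat n n" and P: "P \<in> carrier_mat n n"
    and Q: "Q \<in> carrier_mat n n" and PQ: "P * Q = 1\<^sub>m n" and QP: "Q * P = 1\<^sub>m n" and APBQ: "A = P * B * Q"
    by auto
  have "mat_poly A (char_poly A) = P * mat_poly B (\<Prod>a\<leftarrow>diag_mat B. [:- a, 1:]) * Q"
    unfolding es d[symmetric] by (rule mat_poly_similar[OF A B P Q PQ QP APBQ])
  also have "\<dots> = 0\<^sub>m n n" using upper_triangular_cayley_hamilton[OF B ut] P Q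
    by (simp add: right_mult_zero_mat[of _ n n] left_mult_zero_mat[of _ n n])
  finally show ?thesis .
qed

definition real_poly :: "complex poly \<Rightarrow> bool" where
  "real_poly p \<longleftrightarrow> (\<forall>i. coeff p i \<in> \<real>)"

lemma real_poly_0[simp]: "real_poly 0" unfolding real_poly_def by simp

lemma real_poly_pCons[simp]: "real_poly (pCons a p) \<longleftrightarrow> a \<in> \<real> \<and> real_poly p"
  unfolding real_poly_def
  by (metis coeff_pCons_0 coeff_pCons_Suc nat.exhaust)

lemma real_poly_smult[simp]: "a \<in> \<real> \<Longrightarrow> real_poly p \<Longrightarrow> real_poly (smult a p)"
  unfolding real_poly_def by simp

lemma real_poly_mult[simp]: "real_poly p \<Longrightarrow> real_poly q \<Longrightarrow> real_poly (p * q)"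
  unfolding real_poly_def coeff_mult by (intro allI sum_in_Reals) auto

lemma real_poly_1[simp]: "real_poly 1" unfolding real_poly_def by (simp add: coeff_1)

lemma real_poly_sum: "(\<And>x. x \<in> S \<Longrightarrow> real_poly (f x)) \<Longrightarrow> real_poly (\<Sum>x\<in>S. f x)"
  unfolding real_poly_def by (simp add: coeff_sum)

lemma real_poly_prod: "(\<And>x. x \<in> S \<Longrightarrow> real_poly (f x)) \<Longrightarrow> real_poly (\<Prod>x\<in>S. f x)"
  by (induction S rule: infinite_finite_induct) auto

lemma herm_mat_mat_poly:
  assumes M: "herm_mat n M" and r: "real_poly p"
  shows "herm_mat n (mat_poly M p)"
  using r
proof (induction p)
  case 0
  then show ?case using herm_mat_carrier[OF M] herm_mat_zero by simp
next
  case (pCons a p)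
  have Mc: "M \<in> carrier_mat n n" using herm_mat_carrier[OF M] .
  have hp: "herm_mat n (mat_poly M p)" using pCons by simp
  have "herm_mat n (M * mat_poly M p)"
    by (rule herm_mat_mult_commute[OF M hp mat_poly_intertwine[OF Mc Mc Mc refl, symmetric]])
  then have "herm_mat n (a \<cdot>\<^sub>m 1\<^sub>m n + 1 \<cdot>\<^sub>m (M * mat_poly M p))"
    using pCons by (intro herm_mat_lincomb herm_mat_one) auto
  then show ?case using Mc by (simp add: mat_poly_pCons[OF Mc] one_smult_mat[of _ n n])
qed

definition eigenvalues :: "complex mat \<Rightarrow> complex set" where
  "eigenvalues M = {e. eigenvalue M e}"

lemma finite_eigenvalues:
  assumes M: "M \<in> carrier_mat n n"
  shows "finite (eigenvalues M)"
proof -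
  have "char_poly M \<noteq> 0" using degree_monic_char_poly[OF M] by auto
  then have "finite {x. poly (char_poly M) x = 0}" by (rule poly_roots_finite)
  moreover have "eigenvalues M = {x. poly (char_poly M) x = 0}"
    unfolding eigenvalues_def using eigenvalue_root_char_poly[OF M] by auto
  ultimately show ?thesis by simp
qed

lemma eigenvaluesE:
  assumes M: "M \<in> carrier_mat n n" and e: "e \<in> eigenvalues M"
  obtains u where "u \<in> carrier_vec n" "u \<noteq> 0\<^sub>v n" "M *\<^sub>v u = e \<cdot>\<^sub>v u"
  using e M unfolding eigenvalues_def eigenvalue_def eigenvector_def by auto

lemma herm_mat_eigenvector_real:
  assumes M: "herm_mat n M" and u: "u \<in> carrier_vec n" and u0: "u \<noteq> 0\<^sub>v n" and e: "M *\<^sub>v u = e \<cdot>\<^sub>v u"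
  shows "e \<in> \<real>"
proof -
  have Mc: "M \<in> carrier_mat n n" using herm_mat_carrier[OF M] .
  have "cinner (M *\<^sub>v u) u = cinner u (M *\<^sub>v u)" by (rule herm_mat_cinner[OF M u u])
  then have "cnj e * cinner u u = e * cinner u u" using u by (simp add: e cinner_smult_left cinner_smult_right)
  moreover have "cinner u u \<noteq> 0" using cinner_self_eq_0D[of u] u u0 by auto
  ultimately have "cnj e = e" by simp
  then show ?thesis using Reals_cnj_iff by auto
qed

lemma herm_mat_eigenvalue_real:
  assumes M: "herm_mat n M" and e: "e \<in> eigenvalues M"
  shows "e \<in> \<real>"
  using eigenvaluesE[OF herm_mat_carrier[OF M] e] herm_mat_eigenvector_real[OF M] by blast

lemma herm_mat_eigenvalue_of_real:
  assumes M: "herm_mat n M" and e: "e \<in> eigenvalues M"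
  shows "e = complex_of_real (Re e)"
  using herm_mat_eigenvalue_real[OF M e] by (simp add: complex_is_Real_iff complex_eq_iff)

lemma herm_mat_mult_square_eq_0D:
  assumes H: "herm_mat n H" and X: "X \<in> carrier_mat n m" and HHX: "H * (H * X) = 0\<^sub>m n m"
  shows "H * X = 0\<^sub>m n m"
proof (rule mat_eq_by_mult_vec)
  have Hc: "H \<in> carrier_mat n n" using herm_mat_carrier[OF H] .
  then show "H * X \<in> carrier_mat n m" using X by simp
  fix v :: "complex vec" assume v: "v \<in> carrier_vec m"
  have Xv: "X *\<^sub>v v \<in> carrier_vec n" using X v by simp
  have "H *\<^sub>v (H *\<^sub>v (X *\<^sub>v v)) = 0\<^sub>v n"
    using arg_cong[OF HHX, of "\<lambda>Y. Y *\<^sub>v v"] Hc X v zero_mat_mult_vec[OF v]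
    by (simp add: assoc_mult_mat_vec[of _ n n _ m])
  then have "H *\<^sub>v (X *\<^sub>v v) = 0\<^sub>v n" by (rule herm_mat_mult_vec_square_eq_0D[OF H Xv])
  then show "(H * X) *\<^sub>v v = 0\<^sub>m n m *\<^sub>v v"
    using Hc X v zero_mat_mult_vec[OF v] by (simp add: assoc_mult_mat_vec[of _ n n _ m])
qed simp

lemma mat_poly_power_eq_0D:
  assumes M: "herm_mat n M" and r: "real_poly r"
  shows "mat_poly M (r ^ Suc m) = 0\<^sub>m n n \<Longrightarrow> mat_poly M r = 0\<^sub>m n n"
proof (induction m)
  case (Suc m)
  have Mc: "M \<in> carrier_mat n n" using herm_mat_carrier[OF M] .
  have "mat_poly M r * (mat_poly M r * mat_poly M (r ^ m)) = 0\<^sub>m n n"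
    using Suc.prems by (simp only: power_Suc mat_poly_mult[OF Mc])
  then have "mat_poly M r * mat_poly M (r ^ m) = 0\<^sub>m n n"
    by (rule herm_mat_mult_square_eq_0D[OF herm_mat_mat_poly[OF M r] mat_poly_carrier[OF Mc]])
  then show ?case by (intro Suc.IH) (simp only: power_Suc mat_poly_mult[OF Mc])
qed simp

lemma prod_linear_dvd_power:
  assumes fin: "finite S" and sub: "set as \<subseteq> S"
  shows "(\<Prod>a\<leftarrow>as. [:- a, 1:]) dvd (\<Prod>e\<in>S. [:- e, 1:]) ^ length as"
  using sub
proof (induction as)
  case Nil
  then show ?case by simp
next
  case (Cons a as)
  have "[:- a, 1:] dvd (\<Prod>e\<in>S. [:- e, 1:])" using Cons.prems fin by (intro dvd_prodI) auto
  moreover have "(\<Prod>a\<leftarrow>as. [:- a, 1:]) dvd (\<Prod>e\<in>S. [:- e, 1:]) ^ length as" using Cons by simp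
  ultimately have "[:- a, 1:] * (\<Prod>a\<leftarrow>as. [:- a, 1:]) dvd (\<Prod>e\<in>S. [:- e, 1:]) * (\<Prod>e\<in>S. [:- e, 1:]) ^ length as"
    by (rule mult_dvd_mono)
  then show ?case by (simp only: prod_list.Cons list.map length_Cons power_Suc)
qed

lemma char_poly_roots_eigenvalues:
  assumes M: "M \<in> carrier_mat n n" and cp: "char_poly M = (\<Prod>a\<leftarrow>as. [:- a, 1:])"
  shows "set as \<subseteq> eigenvalues M"
proof
  fix a assume "a \<in> set as"
  then have "poly (char_poly M) a = 0" unfolding cp
    by (force simp: poly_prod_list prod_list_zero_iff)
  then show "a \<in> eigenvalues M" unfolding eigenvalues_def using eigenvalue_root_char_poly[OF M] by simp
qed

lemma eigenvalues_nonempty: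
  assumes M: "M \<in> carrier_mat n n" and "n \<ge> 1"
  shows "eigenvalues M \<noteq> {}"
proof -
  obtain as where "char_poly M = (\<Prod>a\<leftarrow>as. [:- a, 1:])" "length as = n"
    using char_poly_factorized[OF M] by blast
  then show ?thesis using char_poly_roots_eigenvalues[OF M] \<open>n \<ge> 1\<close> by fastforce
qed

lemma mat_poly_prod_eigenvalues:
  assumes M: "herm_mat n M"
  shows "mat_poly M (\<Prod>e\<in>eigenvalues M. [:- e, 1:]) = 0\<^sub>m n n"
proof (cases n)
  case 0
  then show ?thesis using mat_poly_carrier[OF herm_mat_carrier[OF M]] by (intro eq_matI) auto
next
  case (Suc m)
  have Mc: "M \<in> carrier_mat n n" using herm_mat_carrier[OF M] .
  obtain as where as: "char_poly M = (\<Prod>a\<leftarrow>as. [:- a, 1:])" "length as = n"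
    using char_poly_factorized[OF Mc] by blast
  let ?r = "\<Prod>e\<in>eigenvalues M. [:- e, 1:]"
  obtain h where h: "?r ^ n = char_poly M * h"
    using prod_linear_dvd_power[OF finite_eigenvalues[OF Mc] char_poly_roots_eigenvalues[OF Mc as(1)]]
    unfolding as by (auto elim: dvdE)
  have "mat_poly M (?r ^ Suc m) = 0\<^sub>m n n"
    unfolding Suc[symmetric] h mat_poly_mult[OF Mc] cayley_hamilton[OF Mc] using Mc
    by (simp add: left_mult_zero_mat[of _ n n])
  moreover have "real_poly ?r" using herm_mat_eigenvalue_real[OF M] by (intro real_poly_prod) auto
  ultimately show ?thesis using mat_poly_power_eq_0D[OF M] by blast
qed

lemma prod_linear_dvd:
  fixes f :: "complex poly"
  assumes fin: "finite S" and z: "\<forall>e\<in>S. poly f e = 0"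
  shows "(\<Prod>e\<in>S. [:- e, 1:]) dvd f"
  using fin z
proof (induction S rule: finite_induct)
  case empty
  then show ?case by simp
next
  case (insert a S)
  then have "(\<Prod>e\<in>S. [:- e, 1:]) dvd f" by simp
  then obtain g where g: "f = (\<Prod>e\<in>S. [:- e, 1:]) * g" by (rule dvdE)
  have ne: "- e + a \<noteq> 0" if "e \<in> S" for e
  proof
    assume h: "- e + a = 0"
    have "a = e + (- e + a)" by (rule add_minus_cancel[symmetric])
    also have "\<dots> = e" using h by simp
    finally have "a = e" .
    then show False using that insert.hyps by simp
  qed
  have "poly (\<Prod>e\<in>S. [:- e, 1:]) a \<noteq> 0" using insert.hyps ne by (simp add: poly_prod prod_zero_iff)
  moreover have "poly f a = 0" using insert.prems by simp
  ultimately have "poly g a = 0" using g by simp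
  then have "[:- a, 1:] dvd g" using poly_eq_0_iff_dvd by blast
  then obtain g' where "g = [:- a, 1:] * g'" by (rule dvdE)
  then have "f = (\<Prod>e\<in>insert a S. [:- e, 1:]) * g'" using g
    by (simp only: prod.insert[OF insert.hyps] ac_simps)
  then show ?case by (rule dvdI)
qed

lemma mat_poly_eq_0_if_vanishes:
  assumes M: "herm_mat n M" and z: "\<forall>e\<in>eigenvalues M. poly f e = 0"
  shows "mat_poly M f = 0\<^sub>m n n"
proof -
  have Mc: "M \<in> carrier_mat n n" using herm_mat_carrier[OF M] .
  obtain g where "f = (\<Prod>e\<in>eigenvalues M. [:- e, 1:]) * g"
    using prod_linear_dvd[OF finite_eigenvalues[OF Mc] z] by (rule dvdE)
  then show ?thesis using mat_poly_prod_eigenvalues[OF M] Mc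
    by (simp add: mat_poly_mult[OF Mc] left_mult_zero_mat[of _ n n])
qed

section \<open>Spectral calculus\<close>

definition lagrange_basis :: "complex set \<Rightarrow> complex \<Rightarrow> complex poly" where
  "lagrange_basis S e = (\<Prod>e'\<in>S - {e}. smult (1 / (e - e')) [:- e', 1:])"

definition lagrange_interp :: "complex set \<Rightarrow> (complex \<Rightarrow> complex) \<Rightarrow> complex poly" where
  "lagrange_interp S y = (\<Sum>e\<in>S. smult (y e) (lagrange_basis S e))"

lemma poly_lagrange_basis:
  assumes fin: "finite S" and e: "e \<in> S" and x: "x \<in> S"
  shows "poly (lagrange_basis S e) x = (if x = e then 1 else 0)"
proof (cases "x = e")
  case True
  have "poly (lagrange_basis S e) x = (\<Prod>e'\<in>S - {e}. 1)"
    unfolding lagrange_basis_def poly_prod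
  proof (rule prod.cong[OF refl])
    fix e' assume "e' \<in> S - {e}"
    then have "e - e' \<noteq> 0" by auto
    have "poly (smult (1 / (e - e')) [:- e', 1:]) x = (1 / (e - e')) * (- e' + x)" by (simp add: diff_divide_distrib)
    also have "- e' + x = e - e'" using True by simp
    also have "(1 / (e - e')) * (e - e') = 1" using \<open>e - e' \<noteq> 0\<close> by simp
    finally show "poly (smult (1 / (e - e')) [:- e', 1:]) x = 1" .
  qed
  then show ?thesis using True by simp
next
  case False
  have "x \<in> S - {e}" using x False by simp
  moreover have "poly (smult (1 / (e - x)) [:- x, 1:]) x = 0" by simp
  ultimately have ex: "\<exists>a\<in>S - {e}. poly (smult (1 / (e - a)) [:- a, 1:]) x = 0" by blast
  have "poly (lagrange_basis S e) x = 0"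
    unfolding lagrange_basis_def poly_prod by (rule prod_zero[OF finite_Diff[OF fin] ex])
  then show ?thesis using False by simp
qed

lemma poly_lagrange_interp:
  assumes fin: "finite S" and x: "x \<in> S"
  shows "poly (lagrange_interp S y) x = y x"
proof -
  have "poly (lagrange_interp S y) x = (\<Sum>e\<in>S. if e = x then y e else 0)"
    unfolding lagrange_interp_def poly_sum
  proof (rule sum.cong[OF refl])
    fix e assume e: "e \<in> S"
    show "poly (smult (y e) (lagrange_basis S e)) x = (if e = x then y e else 0)"
      using poly_lagrange_basis[OF fin e x] by auto
  qed
  also have "\<dots> = y x" using fin x by simp
  finally show ?thesis .
qed

lemma real_poly_lagrange_basis:
  assumes "S \<subseteq> \<real>" "e \<in> \<real>"
  shows "real_poly (lagrange_basis S e)"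
  unfolding lagrange_basis_def using assms by (intro real_poly_prod) auto

lemma real_poly_lagrange_interp:
  assumes "S \<subseteq> \<real>" "\<And>e. e \<in> S \<Longrightarrow> y e \<in> \<real>"
  shows "real_poly (lagrange_interp S y)"
  unfolding lagrange_interp_def using assms by (intro real_poly_sum real_poly_smult real_poly_lagrange_basis) auto

lemma mat_diff_eq_0D:
  fixes X Y :: "complex mat"
  assumes "X \<in> carrier_mat n n" "Y \<in> carrier_mat n n" "X - Y = 0\<^sub>m n n"
  shows "X = Y"
proof (rule eq_matI)
  fix i j assume "i < dim_row Y" "j < dim_col Y"
  then have "X $$ (i,j) - Y $$ (i,j) = (X - Y) $$ (i,j)" using assms(1,2) by simp
  also have "\<dots> = 0" using assms \<open>i < dim_row Y\<close> \<open>j < dim_col Y\<close> by simp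
  finally show "X $$ (i,j) = Y $$ (i,j)" by simp
qed (use assms in auto)

lemma mat_poly_cong_eigenvalues:
  assumes M: "herm_mat n M" and eq: "\<forall>e\<in>eigenvalues M. poly f e = poly g e"
  shows "mat_poly M f = mat_poly M g"
proof -
  have Mc: "M \<in> carrier_mat n n" using herm_mat_carrier[OF M] .
  have "\<forall>e\<in>eigenvalues M. poly (f - g) e = 0" using eq by simp
  then have "mat_poly M (f - g) = 0\<^sub>m n n" by (rule mat_poly_eq_0_if_vanishes[OF M])
  then have "mat_poly M f - mat_poly M g = 0\<^sub>m n n" by (simp only: mat_poly_diff[OF Mc])
  then show ?thesis by (rule mat_diff_eq_0D[OF mat_poly_carrier[OF Mc] mat_poly_carrier[OF Mc]])
qed

lemma psd_mat_mat_poly: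
  assumes M: "herm_mat n M"
    and pos: "\<And>e. e \<in> eigenvalues M \<Longrightarrow> poly f e \<in> \<real> \<and> 0 \<le> Re (poly f e)"
  shows "psd_mat n (mat_poly M f)"
proof -
  have Mc: "M \<in> carrier_mat n n" using herm_mat_carrier[OF M] .
  define g where "g = lagrange_interp (eigenvalues M) (\<lambda>e. complex_of_real (sqrt (Re (poly f e))))"
  have fin: "finite (eigenvalues M)" by (rule finite_eigenvalues[OF Mc])
  have rg: "real_poly g" unfolding g_def using herm_mat_eigenvalue_real[OF M] by (intro real_poly_lagrange_interp) auto
  have "\<forall>e\<in>eigenvalues M. poly f e = poly (g * g) e"
  proof
    fix e assume e: "e \<in> eigenvalues M"
    have s: "sqrt (Re (poly f e)) * sqrt (Re (poly f e)) = Re (poly f e)" using pos[OF e] by simp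
    have "poly (g * g) e = complex_of_real (sqrt (Re (poly f e))) * complex_of_real (sqrt (Re (poly f e)))"
      unfolding g_def using poly_lagrange_interp[OF fin e] by simp
    also have "\<dots> = complex_of_real (Re (poly f e))" by (metis of_real_mult s)
    also have "\<dots> = poly f e" using pos[OF e] by (simp add: complex_is_Real_iff complex_eq_iff)
    finally show "poly f e = poly (g * g) e" by simp
  qed
  then have "mat_poly M f = mat_poly M g * mat_poly M g"
    using mat_poly_cong_eigenvalues[OF M] mat_poly_mult[OF Mc] by metis
  then show ?thesis using psd_mat_square[OF herm_mat_mat_poly[OF M rg]] by simp
qed

lemma mat_poly_lagrange_basis_eigenvector:
  assumes M: "herm_mat n M" and a: "a \<in> eigenvalues M" and v: "v \<in> carrier_vec n"
  shows "M *\<^sub>v (mat_poly M (lagrange_basis (eigenvalues M) a) *\<^sub>v v) =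
    a \<cdot>\<^sub>v (mat_poly M (lagrange_basis (eigenvalues M) a) *\<^sub>v v)"
proof -
  have Mc: "M \<in> carrier_mat n n" using herm_mat_carrier[OF M] .
  have fin: "finite (eigenvalues M)" by (rule finite_eigenvalues[OF Mc])
  define w where "w = mat_poly M (lagrange_basis (eigenvalues M) a) *\<^sub>v v"
  have w: "w \<in> carrier_vec n" unfolding w_def using mult_mat_vec_carrier[OF mat_poly_carrier[OF Mc] v] .
  have "mat_poly M ([:- a, 1:] * lagrange_basis (eigenvalues M) a) = 0\<^sub>m n n"
    using fin a by (intro mat_poly_eq_0_if_vanishes[OF M]) (auto simp: poly_lagrange_basis)
  then have "mat_poly M [:- a, 1:] *\<^sub>v w = 0\<^sub>m n n *\<^sub>v v"
    unfolding w_def mat_poly_mult[OF Mc]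
    using assoc_mult_mat_vec[OF mat_poly_carrier[OF Mc] mat_poly_carrier[OF Mc] v] by metis
  also have "0\<^sub>m n n *\<^sub>v v = 0\<^sub>v n" by (rule zero_mat_mult_vec[OF v])
  finally have "(- a) \<cdot>\<^sub>v w + M *\<^sub>v w = 0\<^sub>v n" using mat_poly_linear_mult_vec[OF Mc w] by simp
  then have "M *\<^sub>v w = a \<cdot>\<^sub>v w"
  proof -
    assume h: "(- a) \<cdot>\<^sub>v w + M *\<^sub>v w = 0\<^sub>v n"
    show ?thesis
    proof (rule eq_vecI)
      fix i assume i: "i < dim_vec (a \<cdot>\<^sub>v w)"
      then have "((- a) \<cdot>\<^sub>v w + M *\<^sub>v w) $ i = 0" using h w by simp
      then show "(M *\<^sub>v w) $ i = (a \<cdot>\<^sub>v w) $ i" using i w Mc by (simp add: algebra_simps)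
    qed (use w Mc in simp)
  qed
  then show ?thesis unfolding w_def .
qed

lemma mat_eq_on_eigenvectors:
  fixes X Y :: "complex mat"
  assumes M: "herm_mat n M" and X: "X \<in> carrier_mat n n" and Y: "Y \<in> carrier_mat n n"
    and h: "\<And>e u. e \<in> eigenvalues M \<Longrightarrow> u \<in> carrier_vec n \<Longrightarrow> M *\<^sub>v u = e \<cdot>\<^sub>v u \<Longrightarrow>
      X *\<^sub>v u = Y *\<^sub>v u"
  shows "X = Y"
proof (rule mat_eq_by_mult_vec[OF X Y])
  fix v :: "complex vec" assume v: "v \<in> carrier_vec n"
  have Mc: "M \<in> carrier_mat n n" using herm_mat_carrier[OF M] .
  have fin: "finite (eigenvalues M)" by (rule finite_eigenvalues[OF Mc])
  have partial_sums: "T \<subseteq> eigenvalues M \<Longrightarrow> X *\<^sub>v (mat_poly M (\<Sum>e\<in>T. lagrange_basis (eigenvalues M) e) *\<^sub>v v) =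
                                 Y *\<^sub>v (mat_poly M (\<Sum>e\<in>T. lagrange_basis (eigenvalues M) e) *\<^sub>v v)" for T
    using finite_subset[OF _ fin, of T]
  proof (induction T rule: infinite_finite_induct)
    case (infinite T)
    then show ?case by blast
  next
    case empty
    have "X *\<^sub>v 0\<^sub>v n = 0\<^sub>v n" "Y *\<^sub>v 0\<^sub>v n = 0\<^sub>v n"
      using X Y by (auto intro: eq_vecI)
    then show ?case using Mc zero_mat_mult_vec[OF v] by simp
  next
    case (insert a T)
    define w where "w = mat_poly M (lagrange_basis (eigenvalues M) a) *\<^sub>v v"
    define z where "z = mat_poly M (\<Sum>e\<in>T. lagrange_basis (eigenvalues M) e) *\<^sub>v v"
    have w: "w \<in> carrier_vec n" unfolding w_def using mult_mat_vec_carrier[OF mat_poly_carrier[OF Mc] v] .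
    have z: "z \<in> carrier_vec n" unfolding z_def using mult_mat_vec_carrier[OF mat_poly_carrier[OF Mc] v] .
    have a: "a \<in> eigenvalues M" using insert by simp
    have "mat_poly M (\<Sum>e\<in>insert a T. lagrange_basis (eigenvalues M) e) *\<^sub>v v = w + z"
      unfolding w_def z_def using insert.hyps v Mc
      by (simp add: mat_poly_add[OF Mc] add_mult_distrib_mat_vec[OF mat_poly_carrier[OF Mc] mat_poly_carrier[OF Mc] v])
    moreover have "X *\<^sub>v w = Y *\<^sub>v w" unfolding w_def
      by (rule h[OF a mult_mat_vec_carrier[OF mat_poly_carrier[OF Mc] v] mat_poly_lagrange_basis_eigenvector[OF M a v]])
    moreover have "X *\<^sub>v z = Y *\<^sub>v z" unfolding z_def using insert by simp
    ultimately show ?case using X Y w z by (simp add: mult_add_distrib_mat_vec[OF X w z] mult_add_distrib_mat_vec[OF Y w z])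
  qed
  have "mat_poly M (\<Sum>e\<in>eigenvalues M. lagrange_basis (eigenvalues M) e) = mat_poly M 1"
    using fin by (intro mat_poly_cong_eigenvalues[OF M]) (auto simp: poly_sum poly_lagrange_basis)
  then have "mat_poly M (\<Sum>e\<in>eigenvalues M. lagrange_basis (eigenvalues M) e) *\<^sub>v v = v" using mat_poly_one[OF Mc] v by simp
  then show "X *\<^sub>v v = Y *\<^sub>v v" using partial_sums[OF subset_refl] by simp
qed

text \<open>Functional calculus: \<open>mat_poly M (spectral_poly M \<phi>)\<close> is \<open>\<phi>(M)\<close>.\<close>

definition spectral_poly :: "complex mat \<Rightarrow> (real \<Rightarrow> real) \<Rightarrow> complex poly" where
  "spectral_poly M \<phi> = lagrange_interp (eigenvalues M) (\<lambda>e. complex_of_real (\<phi> (Re e)))"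

lemma poly_spectral_poly:
  assumes M: "herm_mat n M" and e: "e \<in> eigenvalues M"
  shows "poly (spectral_poly M \<phi>) e = complex_of_real (\<phi> (Re e))"
  unfolding spectral_poly_def
  by (rule poly_lagrange_interp[OF finite_eigenvalues[OF herm_mat_carrier[OF M]] e])

lemma real_poly_spectral_poly: "herm_mat n M \<Longrightarrow> real_poly (spectral_poly M \<phi>)"
  unfolding spectral_poly_def using herm_mat_eigenvalue_real by (intro real_poly_lagrange_interp) auto

section \<open>The Jordan decomposition of a Hermitian matrix\<close>

definition jordan_decomp :: "nat \<Rightarrow> complex mat \<Rightarrow> complex mat \<Rightarrow> complex mat \<Rightarrow> bool" where
  "jordan_decomp n M P N \<longleftrightarrow> psd_mat n P \<and> psd_mat n N \<and> M = P - N \<and> P * N = 0\<^sub>m n n"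

lemma psd_mat_square_eigen_nonpos:
  assumes P: "psd_mat n P" and u: "u \<in> carrier_vec n"
    and PPu: "P *\<^sub>v (P *\<^sub>v u) = complex_of_real r \<cdot>\<^sub>v (P *\<^sub>v u)" and r: "r \<le> 0"
  shows "P *\<^sub>v u = 0\<^sub>v n"
proof -
  have Pc: "P \<in> carrier_mat n n" using psd_mat_carrier[OF P] .
  have "cinner (P *\<^sub>v u) (P *\<^sub>v u) = cinner u (P *\<^sub>v (P *\<^sub>v u))"
    using herm_mat_cinner[OF psd_mat_herm[OF P] u] Pc u by simp
  also have "\<dots> = complex_of_real r * cinner u (P *\<^sub>v u)"
    unfolding PPu using Pc u by (simp add: cinner_smult_right)
  finally have "Re (cinner (P *\<^sub>v u) (P *\<^sub>v u)) \<le> 0"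
    using psd_mat_cinner[OF P u] r by (simp add: mult_nonpos_nonneg)
  then show ?thesis using Re_cinner_self_le_0D[of "P *\<^sub>v u"] Pc by simp
qed

lemma herm_mat_mult_eq_0_commute_vec:
  assumes P: "herm_mat n P" and N: "herm_mat n N" and PN: "P * N = 0\<^sub>m n n" and u: "u \<in> carrier_vec n"
  shows "N *\<^sub>v (P *\<^sub>v u) = 0\<^sub>v n"
proof -
  have Pc: "P \<in> carrier_mat n n" and Nc: "N \<in> carrier_mat n n" using P N herm_mat_carrier by auto
  define x where "x = N *\<^sub>v (P *\<^sub>v u)"
  have x: "x \<in> carrier_vec n" unfolding x_def using Nc Pc u by simp
  have "cinner x x = cinner (P *\<^sub>v (N *\<^sub>v x)) u"
    unfolding x_def using herm_mat_cinner[OF N] herm_mat_cinner[OF P] Pc Nc u x x_def by simp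
  also have "P *\<^sub>v (N *\<^sub>v x) = 0\<^sub>v n"
    using assoc_mult_mat_vec[OF Pc Nc x, symmetric] PN zero_mat_mult_vec[OF x] by simp
  finally have "cinner x x = 0" by (simp add: cinner_zero_left)
  then show ?thesis using cinner_self_eq_0D[of x] Nc unfolding x_def by simp
qed

text \<open>On an eigenvector of \<open>M = P - N\<close>, both \<open>P\<close> and \<open>N\<close> act as scalars: \<open>P u - N u = r u\<close>
  and \<open>P N = 0\<close> make \<open>P u\<close> an eigenvector of \<open>P\<close> and \<open>N u\<close> one of \<open>N\<close>, with eigenvalues
  \<open>r\<close> and \<open>-r\<close>, and positivity kills the one with the wrong sign.\<close>

lemma jordan_decomp_pos_eigenvector:
  assumes d: "jordan_decomp n M P N" and u: "u \<in> carrier_vec n"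
    and Mu: "M *\<^sub>v u = complex_of_real r \<cdot>\<^sub>v u"
  shows "P *\<^sub>v u = complex_of_real (max r 0) \<cdot>\<^sub>v u"
proof -
  have P: "psd_mat n P" and N: "psd_mat n N" and MPN: "M = P - N" and PN: "P * N = 0\<^sub>m n n"
    using d unfolding jordan_decomp_def by auto
  have Pc: "P \<in> carrier_mat n n" and Nc: "N \<in> carrier_mat n n" using P N psd_mat_carrier by auto
  have Pu: "P *\<^sub>v u = complex_of_real r \<cdot>\<^sub>v u + N *\<^sub>v u"
  proof (rule eq_vecI)
    fix i assume "i < dim_vec (complex_of_real r \<cdot>\<^sub>v u + N *\<^sub>v u)"
    then have i: "i < n" using Nc by simp
    have "(M *\<^sub>v u) $ i = (P *\<^sub>v u) $ i - (N *\<^sub>v u) $ i"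
      unfolding MPN using i Pc Nc u by (simp add: minus_mult_distrib_mat_vec[OF Pc Nc u])
    then show "(P *\<^sub>v u) $ i = (complex_of_real r \<cdot>\<^sub>v u + N *\<^sub>v u) $ i"
      unfolding Mu using i u Nc by simp
  qed (use Pc Nc in simp)
  have Nu: "N *\<^sub>v u = P *\<^sub>v u - complex_of_real r \<cdot>\<^sub>v u"
  proof (rule eq_vecI)
    fix i assume "i < dim_vec (P *\<^sub>v u - complex_of_real r \<cdot>\<^sub>v u)"
    then have i: "i < n" using u by simp
    have "(P *\<^sub>v u) $ i = (complex_of_real r \<cdot>\<^sub>v u + N *\<^sub>v u) $ i" using Pu by simp
    then show "(N *\<^sub>v u) $ i = (P *\<^sub>v u - complex_of_real r \<cdot>\<^sub>v u) $ i" using i u Nc Pc by simp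
  qed (use Pc Nc u in simp)
  have NPu: "N *\<^sub>v (P *\<^sub>v u) = 0\<^sub>v n"
    by (rule herm_mat_mult_eq_0_commute_vec[OF psd_mat_herm[OF P] psd_mat_herm[OF N] PN u])
  have PNu: "P *\<^sub>v (N *\<^sub>v u) = 0\<^sub>v n"
    using assoc_mult_mat_vec[OF Pc Nc u, symmetric] PN zero_mat_mult_vec[OF u] by simp
  have "P *\<^sub>v (P *\<^sub>v u) = complex_of_real r \<cdot>\<^sub>v (P *\<^sub>v u)"
    unfolding arg_cong[OF Pu, of "\<lambda>x. P *\<^sub>v x"] using PNu Pc Nc u
    by (simp add: mult_add_distrib_mat_vec[of _ n n] mult_mat_vec[OF Pc u])
  moreover have "N *\<^sub>v (N *\<^sub>v u) = complex_of_real (- r) \<cdot>\<^sub>v (N *\<^sub>v u)"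
    unfolding arg_cong[OF Nu, of "\<lambda>x. N *\<^sub>v x"] using NPu Pc Nc u
    by (intro eq_vecI) (auto simp: mult_minus_distrib_mat_vec[of _ n n] mult_mat_vec[OF Nc u])
  ultimately show ?thesis
  proof (cases "r > 0")
    case True
    then have "N *\<^sub>v u = 0\<^sub>v n"
      using psd_mat_square_eigen_nonpos[OF N u, of "- r"] \<open>N *\<^sub>v (N *\<^sub>v u) = _\<close> by simp
    then show ?thesis using Pu True u by (intro eq_vecI) auto
  next
    case False
    then have "P *\<^sub>v u = 0\<^sub>v n"
      using psd_mat_square_eigen_nonpos[OF P u] \<open>P *\<^sub>v (P *\<^sub>v u) = _\<close> by simp
    then show ?thesis using False u by (intro eq_vecI) auto
  qed
qed

lemma jordan_decomp_neg_eigenvector: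
  assumes d: "jordan_decomp n M P N" and u: "u \<in> carrier_vec n"
    and Mu: "M *\<^sub>v u = complex_of_real r \<cdot>\<^sub>v u"
  shows "N *\<^sub>v u = complex_of_real (max (- r) 0) \<cdot>\<^sub>v u"
proof -
  have Pc: "P \<in> carrier_mat n n" and Nc: "N \<in> carrier_mat n n" and MPN: "M = P - N"
    using d psd_mat_carrier unfolding jordan_decomp_def by auto
  have Pu: "P *\<^sub>v u = complex_of_real (max r 0) \<cdot>\<^sub>v u"
    by (rule jordan_decomp_pos_eigenvector[OF d u Mu])
  show ?thesis
  proof (rule eq_vecI)
    fix i assume "i < dim_vec (complex_of_real (max (- r) 0) \<cdot>\<^sub>v u)"
    then have i: "i < n" using u by simp
    have "(N *\<^sub>v u) $ i = (P *\<^sub>v u) $ i - (M *\<^sub>v u) $ i"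
      unfolding MPN using i Pc Nc u by (simp add: minus_mult_distrib_mat_vec[OF Pc Nc u])
    also have "\<dots> = complex_of_real (max (- r) 0) * u $ i"
      unfolding Pu Mu using i u by (cases "r \<ge> 0") (auto simp: algebra_simps max_def)
    finally show "(N *\<^sub>v u) $ i = (complex_of_real (max (- r) 0) \<cdot>\<^sub>v u) $ i" using i u by simp
  qed (use Nc u in simp)
qed

lemma jordan_decomp_unique:
  assumes M: "herm_mat n M" and d1: "jordan_decomp n M P N" and d2: "jordan_decomp n M P' N'"
  shows "P = P'" "N = N'"
proof -
  have c: "P \<in> carrier_mat n n" "N \<in> carrier_mat n n" "P' \<in> carrier_mat n n" "N' \<in> carrier_mat n n"
    using d1 d2 psd_mat_carrier unfolding jordan_decomp_def by auto
  have r: "M *\<^sub>v u = complex_of_real (Re e) \<cdot>\<^sub>v u" if "e \<in> eigenvalues M" "M *\<^sub>v u = e \<cdot>\<^sub>v u" for e u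
    using that herm_mat_eigenvalue_of_real[OF M that(1)] by simp
  show "P = P'"
    using jordan_decomp_pos_eigenvector[OF d1 _ r] jordan_decomp_pos_eigenvector[OF d2 _ r]
    by (intro mat_eq_on_eigenvectors[OF M c(1) c(3)]) simp
  show "N = N'"
    using jordan_decomp_neg_eigenvector[OF d1 _ r] jordan_decomp_neg_eigenvector[OF d2 _ r]
    by (intro mat_eq_on_eigenvectors[OF M c(2) c(4)]) simp
qed

lemma jordan_decomp_spectral_poly:
  assumes M: "herm_mat n M"
  shows "jordan_decomp n M (mat_poly M (spectral_poly M (\<lambda>x. max x 0)))
                           (mat_poly M (spectral_poly M (\<lambda>x. max (- x) 0)))"
    (is "jordan_decomp n M (mat_poly M ?p) (mat_poly M ?q)")
  unfolding jordan_decomp_def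
proof (intro conjI)
  have Mc: "M \<in> carrier_mat n n" using herm_mat_carrier[OF M] .
  show "psd_mat n (mat_poly M ?p)" "psd_mat n (mat_poly M ?q)"
    by (rule psd_mat_mat_poly[OF M], simp add: poly_spectral_poly[OF M])+
  have "mat_poly M [:0,1:] = mat_poly M (?p - ?q)"
  proof (rule mat_poly_cong_eigenvalues[OF M], intro ballI)
    fix e assume e: "e \<in> eigenvalues M"
    have "max (Re e) 0 - max (- Re e) 0 = Re e" by (simp add: max_def)
    then show "poly [:0, 1:] e = poly (?p - ?q) e"
      using herm_mat_eigenvalue_of_real[OF M e] by (simp add: poly_spectral_poly[OF M e] flip: of_real_diff)
  qed
  then show "M = mat_poly M ?p - mat_poly M ?q" by (simp add: mat_poly_X[OF Mc] mat_poly_diff[OF Mc])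
  have "mat_poly M (?p * ?q) = 0\<^sub>m n n"
  proof (rule mat_poly_eq_0_if_vanishes[OF M], intro ballI)
    fix e assume e: "e \<in> eigenvalues M"
    have "max (Re e) 0 * max (- Re e) 0 = 0" by (simp add: max_def)
    then show "poly (?p * ?q) e = 0"
      by (simp add: poly_spectral_poly[OF M e] of_real_mult[symmetric] del: of_real_mult)
  qed
  then show "mat_poly M ?p * mat_poly M ?q = 0\<^sub>m n n" by (simp add: mat_poly_mult[OF Mc])
qed

lemma jordan_parts_eq_jordan_decomp:
  assumes M: "herm_mat n M" and d: "jordan_decomp n M P N"
  shows "pos_part M = P" "neg_part M = N"
proof -
  have "jordan_parts M = (P, N)"
    unfolding jordan_parts_def herm_mat_carrier[OF M, THEN carrier_matD(1)]
  proof (rule the_equality)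
    show "case (P, N) of (P, N) \<Rightarrow> psd_mat n P \<and> psd_mat n N \<and> M = P - N \<and> P * N = 0\<^sub>m n n"
      using d unfolding jordan_decomp_def by simp
    fix x assume "case x of (P, N) \<Rightarrow> psd_mat n P \<and> psd_mat n N \<and> M = P - N \<and> P * N = 0\<^sub>m n n"
    then show "x = (P, N)"
      using jordan_decomp_unique[OF M _ d] unfolding jordan_decomp_def by (cases x) auto
  qed
  then show "pos_part M = P" "neg_part M = N" unfolding pos_part_def neg_part_def by simp_all
qed

section \<open>Operator norms and extremal eigenvalues\<close>

lemma unit_eigenvector_exists:
  assumes M: "M \<in> carrier_mat n n" and e: "e \<in> eigenvalues M"
  obtains u where "u \<in> carrier_vec n" "vnorm u = 1" "M *\<^sub>v u = e \<cdot>\<^sub>v u"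
proof -
  obtain x where x: "x \<in> carrier_vec n" "x \<noteq> 0\<^sub>v n" "M *\<^sub>v x = e \<cdot>\<^sub>v x"
    using eigenvaluesE[OF M e] by blast
  have xpos: "0 < vnorm x" using vnorm_pos[of x] x by simp
  define u where "u = complex_of_real (1 / vnorm x) \<cdot>\<^sub>v x"
  have "u \<in> carrier_vec n" unfolding u_def using x by simp
  moreover have "vnorm u = 1" unfolding u_def vnorm_smult using xpos by (simp add: norm_divide)
  moreover have "M *\<^sub>v u = e \<cdot>\<^sub>v u"
    unfolding u_def mult_mat_vec[OF M x(1)] x(3) by (simp add: smult_smult_assoc mult.commute)
  ultimately show ?thesis by (rule that)
qed

lemma op_norm_eqI:
  assumes F: "F \<in> carrier_mat n n"
    and bound: "\<And>v. v \<in> carrier_vec n \<Longrightarrow> vnorm (F *\<^sub>v v) \<le> t * vnorm v" and t: "0 \<le> t"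
    and u: "u \<in> carrier_vec n" "vnorm u = 1" "vnorm (F *\<^sub>v u) = t"
  shows "op_norm F = t"
  unfolding op_norm_def carrier_matD(2)[OF F]
proof (rule cSup_eq_maximum)
  show "t \<in> {vnorm (F *\<^sub>v v) | v. v \<in> carrier_vec n \<and> vnorm v \<le> 1}" using u by force
  fix y assume "y \<in> {vnorm (F *\<^sub>v v) | v. v \<in> carrier_vec n \<and> vnorm v \<le> 1}"
  then obtain v where v: "v \<in> carrier_vec n" "vnorm v \<le> 1" "y = vnorm (F *\<^sub>v v)" by blast
  have "y \<le> t * vnorm v" using bound[OF v(1)] v(3) by simp
  also have "\<dots> \<le> t" using v(2) t by (simp add: mult_left_le)
  finally show "y \<le> t" .
qed

lemma vnorm_mult_vec_le:
  assumes F: "herm_mat n F" and t: "0 \<le> t"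
    and psd: "psd_mat n (complex_of_real (t * t) \<cdot>\<^sub>m 1\<^sub>m n - F * F)" and v: "v \<in> carrier_vec n"
  shows "vnorm (F *\<^sub>v v) \<le> t * vnorm v"
proof -
  have Fc: "F \<in> carrier_mat n n" using herm_mat_carrier[OF F] .
  have Fv: "F *\<^sub>v v \<in> carrier_vec n" using Fc v by simp
  have "(complex_of_real (t * t) \<cdot>\<^sub>m 1\<^sub>m n - F * F) *\<^sub>v v =
      complex_of_real (t * t) \<cdot>\<^sub>v v - F *\<^sub>v (F *\<^sub>v v)"
    using Fc v by (simp add: minus_mult_distrib_mat_vec[of _ n n] smult_mat_mult_vec[OF one_carrier_mat v]
        assoc_mult_mat_vec[OF Fc Fc v])
  then have "cinner v ((complex_of_real (t * t) \<cdot>\<^sub>m 1\<^sub>m n - F * F) *\<^sub>v v) =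
      complex_of_real (t * t) * cinner v v - cinner (F *\<^sub>v v) (F *\<^sub>v v)"
    using v Fc herm_mat_cinner[OF F v Fv] by (simp add: cinner_diff_right cinner_smult_right)
  then have "0 \<le> t * t * (vnorm v)\<^sup>2 - (vnorm (F *\<^sub>v v))\<^sup>2"
    using psd_mat_cinner[OF psd v] by (simp add: cinner_self_vnorm)
  then have "(vnorm (F *\<^sub>v v))\<^sup>2 \<le> (t * vnorm v)\<^sup>2" by (simp add: power2_eq_square mult_ac)
  then show ?thesis by (rule power2_le_imp_le) (use t vnorm_nonneg[of v] in simp)
qed

text \<open>If \<open>0 \<le> f \<le> t\<close> on the spectrum, then \<open>t\<^sup>2 - f(M)\<^sup>2\<close> is positive semidefinite, and
  \<open>f(M)\<close> attains the norm \<open>t\<close> on an eigenvector where \<open>f = t\<close>.\<close>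

lemma op_norm_mat_poly:
  assumes M: "herm_mat n M" and t: "t \<ge> 0" and f: "real_poly f"
    and bounds: "\<And>e. e \<in> eigenvalues M \<Longrightarrow> \<exists>r. poly f e = complex_of_real r \<and> 0 \<le> r \<and> r \<le> t"
    and e0: "e0 \<in> eigenvalues M" and fe0: "poly f e0 = complex_of_real t"
  shows "op_norm (mat_poly M f) = t"
proof -
  have Mc: "M \<in> carrier_mat n n" using herm_mat_carrier[OF M] .
  have "psd_mat n (mat_poly M ([: complex_of_real (t * t) :] - f * f))"
  proof (rule psd_mat_mat_poly[OF M])
    fix e assume "e \<in> eigenvalues M"
    then obtain r where "poly f e = complex_of_real r" "0 \<le> r" "r \<le> t" using bounds by blast
    moreover have "r * r \<le> t * t" using \<open>0 \<le> r\<close> \<open>r \<le> t\<close> by (simp add: mult_mono)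
    ultimately show "poly ([: complex_of_real (t * t) :] - f * f) e \<in> \<real> \<and>
        0 \<le> Re (poly ([: complex_of_real (t * t) :] - f * f) e)" by simp
  qed
  then have psd: "psd_mat n (complex_of_real (t * t) \<cdot>\<^sub>m 1\<^sub>m n - mat_poly M f * mat_poly M f)"
    by (simp add: mat_poly_diff[OF Mc] mat_poly_const[OF Mc] mat_poly_mult[OF Mc])
  obtain u where u: "u \<in> carrier_vec n" "vnorm u = 1" "M *\<^sub>v u = e0 \<cdot>\<^sub>v u"
    using unit_eigenvector_exists[OF Mc e0] by blast
  have "vnorm (mat_poly M f *\<^sub>v u) = t"
    using mat_poly_eigenvector[OF Mc u(1,3)] fe0 u(2) t by (simp add: vnorm_smult)
  with vnorm_mult_vec_le[OF herm_mat_mat_poly[OF M f] t psd] show ?thesis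
    by (intro op_norm_eqI[OF mat_poly_carrier[OF Mc] _ t u(1,2)])
qed

definition max_eigenvalue :: "complex mat \<Rightarrow> real" where
  "max_eigenvalue M = Max (Re ` eigenvalues M)"

definition min_eigenvalue :: "complex mat \<Rightarrow> real" where
  "min_eigenvalue M = Min (Re ` eigenvalues M)"

lemma eigenvalue_bounds:
  assumes "M \<in> carrier_mat n n" "e \<in> eigenvalues M"
  shows "min_eigenvalue M \<le> Re e" "Re e \<le> max_eigenvalue M"
  using assms finite_eigenvalues unfolding max_eigenvalue_def min_eigenvalue_def by auto

lemma extremal_eigenvalues:
  assumes M: "herm_mat n M" and n: "n \<ge> 1"
  shows "complex_of_real (max_eigenvalue M) \<in> eigenvalues M"
    "complex_of_real (min_eigenvalue M) \<in> eigenvalues M"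
proof -
  have Mc: "M \<in> carrier_mat n n" using herm_mat_carrier[OF M] .
  have fin: "finite (Re ` eigenvalues M)" and ne: "Re ` eigenvalues M \<noteq> {}"
    using finite_eigenvalues[OF Mc] eigenvalues_nonempty[OF Mc n] by auto
  have "max_eigenvalue M \<in> Re ` eigenvalues M" "min_eigenvalue M \<in> Re ` eigenvalues M"
    unfolding max_eigenvalue_def min_eigenvalue_def using Max_in[OF fin ne] Min_in[OF fin ne] by auto
  then show "complex_of_real (max_eigenvalue M) \<in> eigenvalues M"
    "complex_of_real (min_eigenvalue M) \<in> eigenvalues M"
    using herm_mat_eigenvalue_of_real[OF M] by auto
qed

lemma op_norm_pos_part:
  assumes M: "herm_mat n M" and n: "n \<ge> 1"
  shows "op_norm (pos_part M) = max (max_eigenvalue M) 0"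
  unfolding jordan_parts_eq_jordan_decomp(1)[OF M jordan_decomp_spectral_poly[OF M]]
proof (rule op_norm_mat_poly[OF M _ real_poly_spectral_poly[OF M] _ extremal_eigenvalues(1)[OF M n]])
  fix e assume "e \<in> eigenvalues M"
  then show "\<exists>r. poly (spectral_poly M (\<lambda>x. max x 0)) e = complex_of_real r \<and> 0 \<le> r \<and>
      r \<le> max (max_eigenvalue M) 0"
    using eigenvalue_bounds(2)[OF herm_mat_carrier[OF M]] poly_spectral_poly[OF M] by force
qed (simp_all add: poly_spectral_poly[OF M extremal_eigenvalues(1)[OF M n]])

lemma op_norm_neg_part:
  assumes M: "herm_mat n M" and n: "n \<ge> 1"
  shows "op_norm (neg_part M) = max (- min_eigenvalue M) 0"
  unfolding jordan_parts_eq_jordan_decomp(2)[OF M jordan_decomp_spectral_poly[OF M]]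
proof (rule op_norm_mat_poly[OF M _ real_poly_spectral_poly[OF M] _ extremal_eigenvalues(2)[OF M n]])
  fix e assume "e \<in> eigenvalues M"
  then show "\<exists>r. poly (spectral_poly M (\<lambda>x. max (- x) 0)) e = complex_of_real r \<and> 0 \<le> r \<and>
      r \<le> max (- min_eigenvalue M) 0"
    using eigenvalue_bounds(1)[OF herm_mat_carrier[OF M]] poly_spectral_poly[OF M] by force
qed (simp_all add: poly_spectral_poly[OF M extremal_eigenvalues(2)[OF M n]])

lemma not_psd_mat_dim_pos: "herm_mat n M \<Longrightarrow> \<not> psd_mat n M \<Longrightarrow> n \<ge> 1"
  using psd_mat_dim_0 by (cases n) auto

lemma not_psd_mat_min_eigenvalue:
  assumes M: "herm_mat n M" and np: "\<not> psd_mat n M"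
  shows "min_eigenvalue M < 0"
proof (rule ccontr)
  assume "\<not> min_eigenvalue M < 0"
  then have "\<And>e. e \<in> eigenvalues M \<Longrightarrow> 0 \<le> Re e"
    using eigenvalue_bounds(1)[OF herm_mat_carrier[OF M]] by force
  then have "psd_mat n (mat_poly M [:0,1:])"
    using herm_mat_eigenvalue_real[OF M] by (intro psd_mat_mat_poly[OF M]) simp
  then show False using np mat_poly_X[OF herm_mat_carrier[OF M]] by simp
qed

lemma not_psd_mat_uminus_max_eigenvalue:
  assumes M: "herm_mat n M" and nn: "\<not> psd_mat n (- M)"
  shows "max_eigenvalue M > 0"
proof (rule ccontr)
  assume "\<not> max_eigenvalue M > 0"
  then have "\<And>e. e \<in> eigenvalues M \<Longrightarrow> Re e \<le> 0"
    using eigenvalue_bounds(2)[OF herm_mat_carrier[OF M]] by force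
  then have "psd_mat n (mat_poly M [:0,-1:])"
    using herm_mat_eigenvalue_real[OF M] by (intro psd_mat_mat_poly[OF M]) simp
  then show False using nn mat_poly_uminus_X[OF herm_mat_carrier[OF M]] by simp
qed

section \<open>Positive unital maps between non-definite matrices\<close>

lemma quad_form_unit_eigenvector:
  assumes A: "A \<in> carrier_mat n n" and u: "u \<in> carrier_vec n" "vnorm u = 1"
    and Au: "A *\<^sub>v u = complex_of_real r \<cdot>\<^sub>v u"
  shows "Re (quad_form A u) = r"
  using quad_form_eq_cinner[OF A u(1)] u by (simp add: Au cinner_smult_right cinner_self_vnorm)

lemma pu_map_vector_states:
  assumes u: "u \<in> carrier_vec n" "vnorm u = 1" and w: "w \<in> carrier_vec n" "vnorm w = 1"
    and C: "psd_mat k C" and D: "psd_mat k D" and CD: "C + D = 1\<^sub>m k"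
  shows "pu_map n k (\<lambda>X. complex_of_real (Re (quad_form X u)) \<cdot>\<^sub>m C +
                          complex_of_real (Re (quad_form X w)) \<cdot>\<^sub>m D)"
    (is "pu_map n k ?\<Phi>")
proof -
  have Cc: "C \<in> carrier_mat k k" and Dc: "D \<in> carrier_mat k k" using C D psd_mat_carrier by auto
  show ?thesis
    unfolding pu_map_def
  proof (intro conjI allI impI)
    fix X assume "herm_mat n X"
    show "herm_mat k (?\<Phi> X)"
      by (rule herm_mat_lincomb[OF psd_mat_herm[OF C] psd_mat_herm[OF D]]) auto
  next
    fix X Y :: "complex mat" and \<alpha> \<beta> :: real
    assume "herm_mat n X \<and> herm_mat n Y"
    then have "X \<in> carrier_mat n n" "Y \<in> carrier_mat n n" using herm_mat_carrier by auto
    then have "Re (quad_form (complex_of_real \<alpha> \<cdot>\<^sub>m X + complex_of_real \<beta> \<cdot>\<^sub>m Y) x) =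
        \<alpha> * Re (quad_form X x) + \<beta> * Re (quad_form Y x)" if "x \<in> carrier_vec n" for x
      using quad_form_lincomb[OF _ _ that] by simp
    then show "?\<Phi> (complex_of_real \<alpha> \<cdot>\<^sub>m X + complex_of_real \<beta> \<cdot>\<^sub>m Y) =
        complex_of_real \<alpha> \<cdot>\<^sub>m ?\<Phi> X + complex_of_real \<beta> \<cdot>\<^sub>m ?\<Phi> Y"
      using u(1) w(1) Cc Dc by (intro eq_matI) (auto simp: algebra_simps)
  next
    fix X assume "psd_mat n X"
    then have "0 \<le> Re (quad_form X u)" "0 \<le> Re (quad_form X w)"
      using u(1) w(1) unfolding psd_mat_def by blast+
    then show "psd_mat k (?\<Phi> X)" by (rule psd_mat_nonneg_lincomb[OF C D])
  next
    have "Re (quad_form (1\<^sub>m n) u) = 1" "Re (quad_form (1\<^sub>m n) w) = 1"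
      using quad_form_unit_eigenvector[of _ n _ 1] u w by simp_all
    then show "?\<Phi> (1\<^sub>m n) = 1\<^sub>m k"
      using CD one_smult_mat[OF Cc] one_smult_mat[OF Dc] by simp
  qed
qed

lemma affine_poly_combination:
  fixes a c :: complex
  assumes "a \<noteq> c"
  shows "smult a (smult (1 / (a - c)) [:- c, 1:]) + smult c (1 - smult (1 / (a - c)) [:- c, 1:]) = [:0, 1:]"
  unfolding poly_eq_poly_eq_iff[symmetric]
proof
  fix x
  have "poly (smult a (smult (1 / (a - c)) [:- c, 1:]) + smult c (1 - smult (1 / (a - c)) [:- c, 1:])) x
      = c + (a - c) * ((x - c) / (a - c))"
    by (simp add: algebra_simps diff_divide_distrib)
  also have "\<dots> = poly [:0, 1:] x" using assms by simp
  finally show "poly (smult a (smult (1 / (a - c)) [:- c, 1:]) + smult c (1 - smult (1 / (a - c)) [:- c, 1:])) x =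
      poly [:0, 1:] x" .
qed

lemma pu_map_onto_spectrum_within:
  assumes A: "herm_mat n A" and B: "herm_mat k B" and ca: "c < a"
    and u: "u \<in> carrier_vec n" "vnorm u = 1" "A *\<^sub>v u = complex_of_real a \<cdot>\<^sub>v u"
    and w: "w \<in> carrier_vec n" "vnorm w = 1" "A *\<^sub>v w = complex_of_real c \<cdot>\<^sub>v w"
    and spec: "\<And>e. e \<in> eigenvalues B \<Longrightarrow> c \<le> Re e \<and> Re e \<le> a"
  shows "\<exists>\<Phi>. pu_map n k \<Phi> \<and> \<Phi> A = B"
proof -
  have Ac: "A \<in> carrier_mat n n" and Bc: "B \<in> carrier_mat k k" using A B herm_mat_carrier by auto
  define f where "f = smult (1 / (complex_of_real a - complex_of_real c)) [:- complex_of_real c, 1:]"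
  have poly_f: "poly f e = complex_of_real ((Re e - c) / (a - c))" if "e \<in> eigenvalues B" for e
  proof -
    have "poly f e = (complex_of_real (Re e) - complex_of_real c) / (complex_of_real a - complex_of_real c)"
      unfolding f_def by (subst herm_mat_eigenvalue_of_real[OF B that]) (simp add: diff_divide_distrib)
    then show ?thesis by simp
  qed
  define C where "C = mat_poly B f"
  define D where "D = mat_poly B (1 - f)"
  have "psd_mat k C" unfolding C_def
    using spec ca poly_f by (intro psd_mat_mat_poly[OF B]) auto
  moreover have "psd_mat k D" unfolding D_def
    using spec ca poly_f by (intro psd_mat_mat_poly[OF B]) auto
  moreover have "C + D = 1\<^sub>m k"
    unfolding C_def D_def by (simp add: mat_poly_add[OF Bc, symmetric] mat_poly_one[OF Bc])
  ultimately have "pu_map n k (\<lambda>X. complex_of_real (Re (quad_form X u)) \<cdot>\<^sub>m C +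
                                   complex_of_real (Re (quad_form X w)) \<cdot>\<^sub>m D)"
    by (rule pu_map_vector_states[OF u(1,2) w(1,2)])
  moreover have "smult (complex_of_real a) f + smult (complex_of_real c) (1 - f) = [:0, 1:]"
    unfolding f_def using ca by (intro affine_poly_combination) simp
  then have "complex_of_real (Re (quad_form A u)) \<cdot>\<^sub>m C + complex_of_real (Re (quad_form A w)) \<cdot>\<^sub>m D = B"
    unfolding quad_form_unit_eigenvector[OF Ac u] quad_form_unit_eigenvector[OF Ac w] C_def D_def
    by (metis mat_poly_add[OF Bc] mat_poly_smult[OF Bc] mat_poly_X[OF Bc])
  ultimately show ?thesis by blast
qed

lemma pu_map_from_nondefinite:
  assumes A: "herm_mat n A" and B: "herm_mat k B" and "\<not> psd_mat n A" "\<not> psd_mat n (- A)"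
    and spec: "\<And>e. e \<in> eigenvalues B \<Longrightarrow> min_eigenvalue A \<le> Re e \<and> Re e \<le> max_eigenvalue A"
  shows "\<exists>\<Phi>. pu_map n k \<Phi> \<and> \<Phi> A = B"
proof -
  have Ac: "A \<in> carrier_mat n n" using herm_mat_carrier[OF A] .
  have n: "n \<ge> 1" using not_psd_mat_dim_pos[OF A] assms(3) .
  obtain u where u: "u \<in> carrier_vec n" "vnorm u = 1" "A *\<^sub>v u = complex_of_real (max_eigenvalue A) \<cdot>\<^sub>v u"
    using unit_eigenvector_exists[OF Ac extremal_eigenvalues(1)[OF A n]] .
  obtain w where w: "w \<in> carrier_vec n" "vnorm w = 1" "A *\<^sub>v w = complex_of_real (min_eigenvalue A) \<cdot>\<^sub>v w"
    using unit_eigenvector_exists[OF Ac extremal_eigenvalues(2)[OF A n]] .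
  have "min_eigenvalue A < max_eigenvalue A"
    using not_psd_mat_min_eigenvalue[OF A] not_psd_mat_uminus_max_eigenvalue[OF A] assms(3,4) by fastforce
  then show ?thesis using pu_map_onto_spectrum_within[OF A B _ u w spec] by blast
qed

theorem mainTheorem9:
  fixes \<mu> :: "complex mat \<Rightarrow> real" and A B :: "complex mat" and n k :: nat
  assumes "pu_monotone \<mu>"
    and "herm_mat n A" and "herm_mat k B"
    and "\<not> psd_mat n A" and "\<not> psd_mat n (- A)"
    and "\<not> psd_mat k B" and "\<not> psd_mat k (- B)"
    and "op_norm (pos_part A) = op_norm (pos_part B)"
    and "op_norm (neg_part A) = op_norm (neg_part B)"
  shows "\<mu> A = \<mu> B"
proof -
  have n: "n \<ge> 1" and k: "k \<ge> 1" using not_psd_mat_dim_pos assms(2-4,6) by blast+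
  have "max_eigenvalue A = max_eigenvalue B"
    using assms(8) op_norm_pos_part[OF assms(2) n] op_norm_pos_part[OF assms(3) k]
      not_psd_mat_uminus_max_eigenvalue[OF assms(2,5)] not_psd_mat_uminus_max_eigenvalue[OF assms(3,7)]
    by simp
  moreover have "min_eigenvalue A = min_eigenvalue B"
    using assms(9) op_norm_neg_part[OF assms(2) n] op_norm_neg_part[OF assms(3) k]
      not_psd_mat_min_eigenvalue[OF assms(2,4)] not_psd_mat_min_eigenvalue[OF assms(3,6)]
    by simp
  ultimately obtain \<Phi> \<Psi> where "pu_map n k \<Phi>" "\<Phi> A = B" "pu_map k n \<Psi>" "\<Psi> B = A"
    using pu_map_from_nondefinite[OF assms(2,3,4,5)] pu_map_from_nondefinite[OF assms(3,2,6,7)]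
      eigenvalue_bounds[OF herm_mat_carrier[OF assms(2)]] eigenvalue_bounds[OF herm_mat_carrier[OF assms(3)]]
    by metis
  then show ?thesis using assms(1-3) n k unfolding pu_monotone_def by (metis order_antisym)
qed

end
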